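(* For any register $\bar q$, projectors $P,Q$ on $\mathcal{H}_{\bar q}$ and program $S$: if $\vdash_{\textsc{Wpc}}[P,Q]_{\bar q}\sqsubseteq S$ or $\vdash_{\textsc{Spc}}[P,Q]_{\bar q}\sqsubseteq S$, then $\models\{P\}S\{Q\}$.
   Context: Setting. $V$ finite set of qubit variables, $\mathcal{H}_W=\bigotimes_{q\in W}\mathcal{H}_q$, $\mathcal{H}_q\cong\mathbb{C}^2$ with basis $\{|0\rangle,|1\rangle\}$; operators on subsystems identified with their extension by identity. Projectors identified with subspaces; $\sqsubseteq$ inclusion; $\wedge,\vee$ meet and join; $P^\perp$ orthocomplement; $I$, $0$ top and bottom. Sasaki implication $P\rightsquigarrow Q=P^\perp\vee(P\wedge Q)$, Sasaki conjunction $P\Cap Q=P\wedge(P^\perp\vee Q)$. $\lceil A\rceil$ support of positive $A$; $E(M)$ eigenspace of $M$ for eigenvalue $1$ ($0$ if none); $\mathrm{tr}_{\bar q}$ partial trace. $\rho\models P$ iff $\lceil\rho\rceil\subseteq P$. Programs $S::=\mathbf{skip}\mid\mathbf{abort}\mid \bar q:=0\mid \bar q \mathrel{*}= U\mid \mathbf{assert}\ P[\bar q]\mid [P,Q]_{\bar q}\mid S_0\oplus_p S_1\mid S_0;S_1\mid \mathbf{if}\ P[\bar q]\ \mathbf{then}\ S_1\ \mathbf{else}\ S_0\ \mathbf{end}\mid \mathbf{while}\ P[\bar q]\ \mathbf{do}\ S\ \mathbf{end}$ with denotations (sets of super-operators): $\{\mathrm{id}\}$, $\{0\}$, $\{\rho\mapsto\sum_i|0\rangle_{\bar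 q}\langle i|\rho|i\rangle_{\bar q}\langle 0|\}$, $\{\rho\mapsto U\rho U^\dagger\}$, $\{\rho\mapsto P\rho P\}$, $\{\mathcal{E}$ completely positive trace-nonincreasing on $\mathcal{H}_{\bar q}:\forall\rho\models P,\mathcal{E}(\rho)\models Q\}$, $\{p\mathcal{E}_0+(1-p)\mathcal{E}_1\}$, $\{\mathcal{E}_1\circ\mathcal{E}_0\}$, $\{\mathcal{E}_1\circ\mathcal{P}+\mathcal{E}_0\circ\mathcal{P}^\perp\}$, $\{\sum_{k\ge0}\mathcal{P}^\perp\circ\mathcal{E}_k\circ\mathcal{P}\circ\cdots\circ\mathcal{E}_1\circ\mathcal{P}\}$ respectively, where $\mathcal{E}_i\in\llbracket S_i\rrbracket$ (resp. $\llbracket S\rrbracket$) are chosen independently, $\mathcal{P}(\rho)=P\rho P$, $\mathcal{P}^\perp(\rho)=P^\perp\rho P^\perp$. $\models\{P\}S\{Q\}$ iff for all partial density operators $\rho$ on $\mathcal{H}_V$ and $\mathcal{E}\in\llbracket S\rrbracket$, $\rho\models P\Rightarrow\mathcal{E}(\rho)\models Q$. $S\sqsubseteq S'$ (refinement) iff for all projectors $P,Q$, $\models\{P\}S\{Q\}\Rightarrow\models\{P\}S'\{Q\}$; $S\equiv S'$ iff both directions. Rules (all schematic in programs, registers, projectors on the relevant register, $p$): Structural: $S\equiv S$; from $S_0\sqsubseteq S_1$ and $S_1\sqsubseteq S_2$ infer $S_0\sqsubseteq S_2$; from $S_0\sqsubseteq T_0$, $S_1\sqsubseteq T_1$ infer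 $S_0;S_1\sqsubseteq T_0;T_1$, $S_0\oplus_pS_1\sqsubseteq T_0\oplus_pT_1$, and $\mathbf{if}\ P[\bar q]\ \mathbf{then}\ S_1\ \mathbf{else}\ S_0\ \mathbf{end}\sqsubseteq\mathbf{if}\ P[\bar q]\ \mathbf{then}\ T_1\ \mathbf{else}\ T_0\ \mathbf{end}$; from $S\sqsubseteq T$ infer $\mathbf{while}\ P[\bar q]\ \mathbf{do}\ S\ \mathbf{end}\sqsubseteq\mathbf{while}\ P[\bar q]\ \mathbf{do}\ T\ \mathbf{end}$. Common: $[0,Q]_{\bar q}\sqsubseteq S$; $[P,I]_{\bar q}\sqsubseteq S$; $[P,Q]_{\bar q}\sqsubseteq\mathbf{abort}$; $[P,P]_{\bar q}\sqsubseteq\mathbf{skip}$; $[P,Q]_{\bar q}\sqsubseteq[R,T]_{\bar q}$ if $P\sqsubseteq R$ and $T\sqsubseteq Q$; $[P,Q]_{\bar q}\sqsubseteq[P,R]_{\bar q};[R,Q]_{\bar q}$. Wpc rules: $[E(\langle0|_{\bar q}Q|0\rangle_{\bar q}),Q]_{\bar q}\sqsubseteq\bar q:=0$; $[U^\dagger_{\bar q}QU_{\bar q},Q]_{\bar q}\sqsubseteq\bar q\mathrel{*}=U$; $[P\rightsquigarrow Q,Q]_{\bar q}\sqsubseteq\mathbf{assert}\ P[\bar q]$; $[P,Q]_{\bar q}\equiv[P_1,Q]_{\bar q}\oplus_p[P_2,Q]_{\bar q}$ if $0<p<1$ and $P=P_1\wedge P_2$; $[(P\rightsquigarrow P_1)\wedge(P^\perp\rightsquigarrow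 P_0),Q]_{\bar q}\equiv\mathbf{if}\ P[\bar q]\ \mathbf{then}\ [P_1,Q]_{\bar q}\ \mathbf{else}\ [P_0,Q]_{\bar q}\ \mathbf{end}$; $[(P\rightsquigarrow Q)\wedge(P^\perp\rightsquigarrow R),R]_{\bar q}\sqsubseteq\mathbf{while}\ P[\bar q]\ \mathbf{do}\ [Q,(P\rightsquigarrow Q)\wedge(P^\perp\rightsquigarrow R)]_{\bar q}\ \mathbf{end}$. Spc rules: $[P,|0\rangle_{\bar q}\langle0|\otimes\lceil\mathrm{tr}_{\bar q}(P)\rceil]_{\bar q}\sqsubseteq\bar q:=0$; $[P,U_{\bar q}PU^\dagger_{\bar q}]_{\bar q}\sqsubseteq\bar q\mathrel{*}=U$; $[P,Q\Cap P]_{\bar q}\sqsubseteq\mathbf{assert}\ Q[\bar q]$; $[P,Q]_{\bar q}\equiv[P,Q_1]_{\bar q}\oplus_p[P,Q_2]_{\bar q}$ if $0<p<1$ and $Q_1\vee Q_2=Q$; $[P,Q]_{\bar q}\sqsubseteq\mathbf{if}\ R[\bar q]\ \mathbf{then}\ [R\Cap P,Q]_{\bar q}\ \mathbf{else}\ [R^\perp\Cap P,Q]_{\bar q}\ \mathbf{end}$; $[Inv,P^\perp\Cap Inv]_{\bar q}\sqsubseteq\mathbf{while}\ P[\bar q]\ \mathbf{do}\ [P\Cap Inv,Inv]_{\bar q}\ \mathbf{end}$. $\vdash_{\textsc{Wpc}}[P,Q]_{\bar q}\sqsubseteq S$ means this relation is derivable from the structural, common and Wpc rules; $\vdash_{\textsc{Spc}}$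 likewise with the Spc rules instead of the Wpc rules (an equivalence $\equiv$ may be used in either direction as $\sqsubseteq$). *)

theory Defs
  imports Complex_Main
begin

section \<open>Hilbert spaces of qubit registers\<close>

text \<open>The finite set V of qubit variables is the universe of a finite type 'v.
A computational basis vector of H_V is an assignment s :: 'v => bool.
For a register W (a set of variables), H_W is realised inside H_V as the span of the
"padded" basis vectors s with s x = False for x outside W (i.e. H_W tensor |0...0>),
so an operator on H_W is a matrix on assignments vanishing outside padded assignments.
Operators on subsystems are identified with their extension by identity via ext.\<close>

type_synonym 'v st = "'v \<Rightarrow> bool"
type_synonym 'v mat = "'v st \<Rightarrow> 'v st \<Rightarrow> complex"
type_synonym 'v vec = "'v st \<Rightarrow> complex"
type_synonym 'v sop = "'v mat \<Rightarrow> 'v mat"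

definition supp_in :: "'v set \<Rightarrow> 'v st \<Rightarrow> bool" where
  "supp_in W s \<longleftrightarrow> (\<forall>x. x \<notin> W \<longrightarrow> \<not> s x)"

definition restr :: "'v set \<Rightarrow> 'v st \<Rightarrow> 'v st" where
  "restr W s = (\<lambda>x. x \<in> W \<and> s x)"

definition merge :: "'v set \<Rightarrow> 'v st \<Rightarrow> 'v st \<Rightarrow> 'v st" where
  "merge R u s = (\<lambda>x. if x \<in> R then u x else s x)"

definition on_reg :: "'v set \<Rightarrow> 'v mat \<Rightarrow> bool" where
  "on_reg W A \<longleftrightarrow> (\<forall>s t. A s t \<noteq> 0 \<longrightarrow> supp_in W s \<and> supp_in W t)"

definition mzero :: "'v mat" where "mzero = (\<lambda>s t. 0)"

definition madd :: "'v mat \<Rightarrow> 'v mat \<Rightarrow> 'v mat" where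
  "madd A B = (\<lambda>s t. A s t + B s t)"

definition msub :: "'v mat \<Rightarrow> 'v mat \<Rightarrow> 'v mat" where
  "msub A B = (\<lambda>s t. A s t - B s t)"

definition mmult :: "'v::finite mat \<Rightarrow> 'v mat \<Rightarrow> 'v mat" (infixl "**" 70) where
  "A ** B = (\<lambda>s t. \<Sum>u\<in>UNIV. A s u * B u t)"

definition madj :: "'v mat \<Rightarrow> 'v mat" where
  "madj A = (\<lambda>s t. cnj (A t s))"

definition mv :: "'v::finite mat \<Rightarrow> 'v vec \<Rightarrow> 'v vec" where
  "mv A x = (\<lambda>s. \<Sum>t\<in>UNIV. A s t * x t)"

definition mtrace :: "'v::finite mat \<Rightarrow> complex" where
  "mtrace A = (\<Sum>s\<in>UNIV. A s s)"

definition idW :: "'v set \<Rightarrow> 'v mat" where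
  "idW W = (\<lambda>s t. if s = t \<and> supp_in W s then 1 else 0)"

definition ketbra :: "'v st \<Rightarrow> 'v st \<Rightarrow> 'v mat" where
  "ketbra u v = (\<lambda>s t. if s = u \<and> t = v then 1 else 0)"

definition zero_st :: "'v st" where "zero_st = (\<lambda>x. False)"

text \<open>extension of an operator B on H_W' to H_W (W' a subregister of W) by the identity
on H_{W - W'}\<close>
definition ext_within :: "'v set \<Rightarrow> 'v set \<Rightarrow> 'v mat \<Rightarrow> 'v mat" where
  "ext_within W W' B = (\<lambda>s t. if supp_in W s \<and> supp_in W t \<and> (\<forall>x. x \<notin> W' \<longrightarrow> s x = t x)
                               then B (restr W' s) (restr W' t) else 0)"

definition ext :: "'v set \<Rightarrow> 'v mat \<Rightarrow> 'v mat" where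
  "ext W B = ext_within UNIV W B"

definition ran :: "'v::finite mat \<Rightarrow> 'v vec set" where
  "ran A = range (mv A)"

definition qf :: "'v::finite mat \<Rightarrow> 'v vec \<Rightarrow> complex" where
  "qf A x = (\<Sum>s\<in>UNIV. \<Sum>t\<in>UNIV. cnj (x s) * A s t * x t)"

definition psd :: "'v::finite mat \<Rightarrow> bool" where
  "psd A \<longleftrightarrow> (\<forall>x. Im (qf A x) = 0 \<and> 0 \<le> Re (qf A x))"

definition pdo :: "'v set \<Rightarrow> 'v::finite mat \<Rightarrow> bool" where
  "pdo W \<rho> \<longleftrightarrow> on_reg W \<rho> \<and> psd \<rho> \<and> Re (mtrace \<rho>) \<le> 1"

definition is_proj :: "'v set \<Rightarrow> 'v::finite mat \<Rightarrow> bool" where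
  "is_proj W P \<longleftrightarrow> on_reg W P \<and> P ** P = P \<and> madj P = P"

definition is_unitary :: "'v set \<Rightarrow> 'v::finite mat \<Rightarrow> bool" where
  "is_unitary W U \<longleftrightarrow> on_reg W U \<and> madj U ** U = idW W \<and> U ** madj U = idW W"

section \<open>Projector lattice (projectors identified with subspaces)\<close>

definition proj_onto :: "'v set \<Rightarrow> 'v::finite vec set \<Rightarrow> 'v mat" where
  "proj_onto W S = (THE P. is_proj W P \<and> ran P = S)"

definition supp :: "'v set \<Rightarrow> 'v::finite mat \<Rightarrow> 'v mat" where
  "supp W A = proj_onto W (ran A)"

definition ple :: "'v::finite mat \<Rightarrow> 'v mat \<Rightarrow> bool" where
  "ple P Q \<longleftrightarrow> ran P \<subseteq> ran Q"

definition pmeet :: "'v set \<Rightarrow> 'v::finite mat \<Rightarrow> 'v mat \<Rightarrow> 'v mat" where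
  "pmeet W P Q = proj_onto W (ran P \<inter> ran Q)"

text \<open>in finite dimension the join of two subspaces is their (closed) sum\<close>
definition pjoin :: "'v set \<Rightarrow> 'v::finite mat \<Rightarrow> 'v mat \<Rightarrow> 'v mat" where
  "pjoin W P Q = proj_onto W {(\<lambda>s. x s + y s) | x y. x \<in> ran P \<and> y \<in> ran Q}"

definition pcomp :: "'v set \<Rightarrow> 'v::finite mat \<Rightarrow> 'v mat" where
  "pcomp W P = msub (idW W) P"

definition sasaki_imp :: "'v set \<Rightarrow> 'v::finite mat \<Rightarrow> 'v mat \<Rightarrow> 'v mat" where
  "sasaki_imp W P Q = pjoin W (pcomp W P) (pmeet W P Q)"

definition sasaki_conj :: "'v set \<Rightarrow> 'v::finite mat \<Rightarrow> 'v mat \<Rightarrow> 'v mat" where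
  "sasaki_conj W P Q = pmeet W P (pjoin W (pcomp W P) Q)"

definition eig1 :: "'v set \<Rightarrow> 'v::finite mat \<Rightarrow> 'v mat" where
  "eig1 W M = proj_onto W {x. x \<in> ran (idW W) \<and> mv M x = x}"

text \<open><0|_R A |0>_R, an operator on the remaining variables\<close>
definition bra0 :: "'v set \<Rightarrow> 'v mat \<Rightarrow> 'v mat" where
  "bra0 R A = (\<lambda>s t. if (\<forall>x\<in>R. \<not> s x \<and> \<not> t x) then A s t else 0)"

definition ptr :: "'v set \<Rightarrow> 'v::finite mat \<Rightarrow> 'v mat" where
  "ptr R A = (\<lambda>s t. if (\<forall>x\<in>R. \<not> s x \<and> \<not> t x)
      then (\<Sum>u\<in>{u. supp_in R u}. A (merge R u s) (merge R u t)) else 0)"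

text \<open>|0>_R<0| tensor C\<close>
definition zt :: "'v set \<Rightarrow> 'v mat \<Rightarrow> 'v mat" where
  "zt R C = (\<lambda>s t. if (\<forall>x\<in>R. \<not> s x \<and> \<not> t x) then C (restr (- R) s) (restr (- R) t) else 0)"

definition models :: "'v::finite mat \<Rightarrow> 'v mat \<Rightarrow> bool" where
  "models \<rho> P \<longleftrightarrow> ran \<rho> \<subseteq> ran P"

datatype 'v prog =
    Skip
  | Abort
  | Init "'v set"
  | Apply "'v set" "'v mat"
  | Assert "'v mat" "'v set"
  | Spec "'v mat" "'v mat" "'v set"
  | PChoice "'v prog" real "'v prog"
  | Seq "'v prog" "'v prog"
  | If "'v mat" "'v set" "'v prog" "'v prog"   (* if P[q] then S1 else S0 end *)
  | While "'v mat" "'v set" "'v prog"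

primrec wf :: "'v::finite prog \<Rightarrow> bool" where
  "wf Skip = True"
| "wf Abort = True"
| "wf (Init q) = True"
| "wf (Apply q U) = is_unitary q U"
| "wf (Assert P q) = is_proj q P"
| "wf (Spec P Q q) = (is_proj q P \<and> is_proj q Q)"
| "wf (PChoice S0 p S1) = (0 \<le> p \<and> p \<le> 1 \<and> wf S0 \<and> wf S1)"
| "wf (Seq S0 S1) = (wf S0 \<and> wf S1)"
| "wf (If P q S1 S0) = (is_proj q P \<and> wf S1 \<and> wf S0)"
| "wf (While P q S) = (is_proj q P \<and> wf S)"

definition kraus :: "'v::finite mat list \<Rightarrow> 'v sop" where
  "kraus As \<rho> = (\<lambda>s t. \<Sum>A\<leftarrow>As. (A ** \<rho> ** madj A) s t)"

definition tni :: "'v set \<Rightarrow> 'v::finite sop \<Rightarrow> bool" where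
  "tni W E \<longleftrightarrow> (\<forall>\<rho>. on_reg W \<rho> \<and> psd \<rho> \<longrightarrow> Re (mtrace (E \<rho>)) \<le> Re (mtrace \<rho>))"

text \<open>Completely positive trace-non-increasing super-operators on H_W (given in Kraus form,
which in finite dimension covers exactly the completely positive maps), satisfying the
specification: all partial density operators on H_W satisfying P are mapped into Q.\<close>
definition spec_kraus :: "'v set \<Rightarrow> 'v::finite mat \<Rightarrow> 'v mat \<Rightarrow> 'v mat list set" where
  "spec_kraus q P Q = {As. (\<forall>A\<in>set As. on_reg q A) \<and> tni q (kraus As)
       \<and> (\<forall>\<rho>. pdo q \<rho> \<and> models \<rho> P \<longrightarrow> models (kraus As \<rho>) Q)}"

primrec loop_iter :: "'v::finite mat \<Rightarrow> (nat \<Rightarrow> 'v sop) \<Rightarrow> nat \<Rightarrow> 'v mat \<Rightarrow> 'v mat" where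
  "loop_iter P Es 0 \<rho> = \<rho>"
| "loop_iter P Es (Suc k) \<rho> = Es k (P ** loop_iter P Es k \<rho> ** P)"

primrec den :: "'v::finite prog \<Rightarrow> 'v sop set" where
  "den Skip = {id}"
| "den Abort = {(\<lambda>\<rho>. mzero)}"
| "den (Init q) = {(\<lambda>\<rho>. (\<lambda>s t. \<Sum>i\<in>{i. supp_in q i}.
        (ext q (ketbra zero_st i) ** \<rho> ** madj (ext q (ketbra zero_st i))) s t))}"
| "den (Apply q U) = {(\<lambda>\<rho>. ext q U ** \<rho> ** madj (ext q U))}"
| "den (Assert P q) = {(\<lambda>\<rho>. ext q P ** \<rho> ** ext q P)}"
| "den (Spec P Q q) = {kraus (map (ext q) As) | As. As \<in> spec_kraus q P Q}"
| "den (PChoice S0 p S1) = {(\<lambda>\<rho>. (\<lambda>s t. complex_of_real p * E0 \<rho> s t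
        + complex_of_real (1 - p) * E1 \<rho> s t)) | E0 E1. E0 \<in> den S0 \<and> E1 \<in> den S1}"
| "den (Seq S0 S1) = {E1 \<circ> E0 | E0 E1. E0 \<in> den S0 \<and> E1 \<in> den S1}"
| "den (If P q S1 S0) = {(\<lambda>\<rho>. madd (E1 (ext q P ** \<rho> ** ext q P))
        (E0 (ext q (pcomp q P) ** \<rho> ** ext q (pcomp q P)))) | E1 E0. E1 \<in> den S1 \<and> E0 \<in> den S0}"
| "den (While P q S) = {(\<lambda>\<rho>. (\<lambda>s t. \<Sum>k. (ext q (pcomp q P) ** loop_iter (ext q P) Es k \<rho>
        ** ext q (pcomp q P)) s t)) | Es. \<forall>k. Es k \<in> den S}"

definition hoare :: "'v::finite mat \<Rightarrow> 'v prog \<Rightarrow> 'v mat \<Rightarrow> bool" where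
  "hoare P S Q \<longleftrightarrow> (\<forall>\<rho> E. pdo UNIV \<rho> \<and> E \<in> den S \<and> models \<rho> P \<longrightarrow> models (E \<rho>) Q)"

section \<open>The refinement calculi\<close>

datatype mode = Wpc | Spc

text \<open>deriv m S T: S [= T is derivable from the structural, common and (m = Wpc) Wpc
resp. (m = Spc) Spc rules; equivalences are included in both directions.\<close>
inductive deriv :: "mode \<Rightarrow> 'v::finite prog \<Rightarrow> 'v prog \<Rightarrow> bool" for m :: mode where
  refl: "wf S \<Longrightarrow> deriv m S S"
| trans: "deriv m S0 S1 \<Longrightarrow> deriv m S1 S2 \<Longrightarrow> deriv m S0 S2"
| seq_mono: "deriv m S0 T0 \<Longrightarrow> deriv m S1 T1 \<Longrightarrow> deriv m (Seq S0 S1) (Seq T0 T1)"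
| pch_mono: "deriv m S0 T0 \<Longrightarrow> deriv m S1 T1 \<Longrightarrow> deriv m (PChoice S0 p S1) (PChoice T0 p T1)"
| if_mono: "deriv m S0 T0 \<Longrightarrow> deriv m S1 T1 \<Longrightarrow> deriv m (If P q S1 S0) (If P q T1 T0)"
| while_mono: "deriv m S T \<Longrightarrow> deriv m (While P q S) (While P q T)"
| c_bot: "is_proj q Q \<Longrightarrow> wf S \<Longrightarrow> deriv m (Spec mzero Q q) S"
| c_top: "is_proj q P \<Longrightarrow> wf S \<Longrightarrow> deriv m (Spec P (idW q) q) S"
| c_abort: "is_proj q P \<Longrightarrow> is_proj q Q \<Longrightarrow> deriv m (Spec P Q q) Abort"
| c_skip: "is_proj q P \<Longrightarrow> deriv m (Spec P P q) Skip"
| c_cons: "is_proj q P \<Longrightarrow> is_proj q Q \<Longrightarrow> is_proj q R \<Longrightarrow> is_proj q T \<Longrightarrow>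
           ple P R \<Longrightarrow> ple T Q \<Longrightarrow> deriv m (Spec P Q q) (Spec R T q)"
| c_seq: "is_proj q P \<Longrightarrow> is_proj q Q \<Longrightarrow> is_proj q R \<Longrightarrow>
          deriv m (Spec P Q q) (Seq (Spec P R q) (Spec R Q q))"
| w_init: "m = Wpc \<Longrightarrow> is_proj q Q \<Longrightarrow>
     deriv m (Spec (ext_within q (q - q) (eig1 (q - q) (bra0 q Q))) Q q) (Init q)"
| w_unit: "m = Wpc \<Longrightarrow> is_proj q Q \<Longrightarrow> is_unitary q U \<Longrightarrow>
     deriv m (Spec (madj U ** Q ** U) Q q) (Apply q U)"
| w_assert: "m = Wpc \<Longrightarrow> is_proj q P \<Longrightarrow> is_proj q Q \<Longrightarrow>
     deriv m (Spec (sasaki_imp q P Q) Q q) (Assert P q)"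
| w_pch1: "m = Wpc \<Longrightarrow> 0 < p \<Longrightarrow> p < 1 \<Longrightarrow> is_proj q P1 \<Longrightarrow> is_proj q P2 \<Longrightarrow> is_proj q Q \<Longrightarrow>
     P = pmeet q P1 P2 \<Longrightarrow> deriv m (Spec P Q q) (PChoice (Spec P1 Q q) p (Spec P2 Q q))"
| w_pch2: "m = Wpc \<Longrightarrow> 0 < p \<Longrightarrow> p < 1 \<Longrightarrow> is_proj q P1 \<Longrightarrow> is_proj q P2 \<Longrightarrow> is_proj q Q \<Longrightarrow>
     P = pmeet q P1 P2 \<Longrightarrow> deriv m (PChoice (Spec P1 Q q) p (Spec P2 Q q)) (Spec P Q q)"
| w_if1: "m = Wpc \<Longrightarrow> is_proj q P \<Longrightarrow> is_proj q P1 \<Longrightarrow> is_proj q P0 \<Longrightarrow> is_proj q Q \<Longrightarrow>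
     deriv m (Spec (pmeet q (sasaki_imp q P P1) (sasaki_imp q (pcomp q P) P0)) Q q)
             (If P q (Spec P1 Q q) (Spec P0 Q q))"
| w_if2: "m = Wpc \<Longrightarrow> is_proj q P \<Longrightarrow> is_proj q P1 \<Longrightarrow> is_proj q P0 \<Longrightarrow> is_proj q Q \<Longrightarrow>
     deriv m (If P q (Spec P1 Q q) (Spec P0 Q q))
             (Spec (pmeet q (sasaki_imp q P P1) (sasaki_imp q (pcomp q P) P0)) Q q)"
| w_while: "m = Wpc \<Longrightarrow> is_proj q P \<Longrightarrow> is_proj q Q \<Longrightarrow> is_proj q R \<Longrightarrow>
     deriv m (Spec (pmeet q (sasaki_imp q P Q) (sasaki_imp q (pcomp q P) R)) R q)
             (While P q (Spec Q (pmeet q (sasaki_imp q P Q) (sasaki_imp q (pcomp q P) R)) q))"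
| s_init: "m = Spc \<Longrightarrow> is_proj q P \<Longrightarrow>
     deriv m (Spec P (zt q (supp (q - q) (ptr q P))) q) (Init q)"
| s_unit: "m = Spc \<Longrightarrow> is_proj q P \<Longrightarrow> is_unitary q U \<Longrightarrow>
     deriv m (Spec P (U ** P ** madj U) q) (Apply q U)"
| s_assert: "m = Spc \<Longrightarrow> is_proj q P \<Longrightarrow> is_proj q Q \<Longrightarrow>
     deriv m (Spec P (sasaki_conj q Q P) q) (Assert Q q)"
| s_pch1: "m = Spc \<Longrightarrow> 0 < p \<Longrightarrow> p < 1 \<Longrightarrow> is_proj q P \<Longrightarrow> is_proj q Q1 \<Longrightarrow> is_proj q Q2 \<Longrightarrow>
     Q = pjoin q Q1 Q2 \<Longrightarrow> deriv m (Spec P Q q) (PChoice (Spec P Q1 q) p (Spec P Q2 q))"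
| s_pch2: "m = Spc \<Longrightarrow> 0 < p \<Longrightarrow> p < 1 \<Longrightarrow> is_proj q P \<Longrightarrow> is_proj q Q1 \<Longrightarrow> is_proj q Q2 \<Longrightarrow>
     Q = pjoin q Q1 Q2 \<Longrightarrow> deriv m (PChoice (Spec P Q1 q) p (Spec P Q2 q)) (Spec P Q q)"
| s_if: "m = Spc \<Longrightarrow> is_proj q P \<Longrightarrow> is_proj q Q \<Longrightarrow> is_proj q R \<Longrightarrow>
     deriv m (Spec P Q q)
             (If R q (Spec (sasaki_conj q R P) Q q) (Spec (sasaki_conj q (pcomp q R) P) Q q))"
| s_while: "m = Spc \<Longrightarrow> is_proj q P \<Longrightarrow> is_proj q Inv \<Longrightarrow>
     deriv m (Spec Inv (sasaki_conj q (pcomp q P) Inv) q)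
             (While P q (Spec (sasaki_conj q P Inv) Inv q))"

end

theory Submission
  imports Defs
begin

text \<open>The proof goes through an auxiliary, syntax-directed Hoare logic over the fixed register \<open>q\<close>:
  \<open>cert q A S B\<close> derives \<open>{A} S {B}\<close> for projectors \<open>A\<close>, \<open>B\<close> on \<open>H_q\<close> (extended by the
  identity). A specification \<open>[X, Y]_q\<close> is certified whenever \<open>A \<subseteq> X\<close> and \<open>Y \<subseteq> B\<close>, atomic
  commands by their valid semantic triples, compound commands by the usual rules (loops through an
  invariant), and every command trivially when \<open>A = 0\<close> or \<open>B = I\<close>.

  Every certified triple is valid: for loops this uses that all denotations are positive and trace
  non-increasing, so that the series of loop exits converges. Conversely, every rule \<open>S \<sqsubseteq> T\<close> of
  either calculus turns a certificate for \<open>S\<close> into one for \<open>T\<close>, by inverting the certificate for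
  \<open>S\<close>; the specification rules need the Sasaki adjunction \<open>P A \<subseteq> Q \<longleftrightarrow> A \<subseteq> (P \<leadsto> Q)\<close>. Starting from
  the certificate of \<open>{P} [P, Q]_q {Q}\<close>, a derivation of \<open>[P, Q]_q \<sqsubseteq> S\<close> thus yields a
  certificate, hence validity, of \<open>{P} S {Q}\<close>.\<close>

lemma mmult_assoc: "((A::'v::finite mat) ** B) ** C = A ** (B ** C)"
  unfolding mmult_def
  by (auto simp: sum_distrib_left sum_distrib_right mult.assoc intro!: ext sum.swap[THEN HOL.trans])

lemma mv_mmult: "mv ((A::'v::finite mat) ** B) x = mv A (mv B x)"
  unfolding mmult_def mv_def
  by (auto simp: sum_distrib_left sum_distrib_right mult.assoc intro!: ext sum.swap[THEN HOL.trans])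

lemma madj_madj [simp]: "madj (madj A) = A"
  by (simp add: madj_def)

lemma madj_mmult: "madj ((A::'v::finite mat) ** B) = madj B ** madj A"
  unfolding madj_def mmult_def by (auto intro!: ext simp: mult.commute)

lemma madj_mzero [simp]: "madj mzero = mzero"
  by (simp add: madj_def mzero_def)

lemma madj_msub: "madj (msub A B) = msub (madj A) (madj B)"
  by (auto simp: madj_def msub_def)

lemma madj_madd: "madj (madd A B) = madd (madj A) (madj B)"
  by (auto simp: madj_def madd_def)

lemma mmult_madd_left: "madd (A::'v::finite mat) B ** C = madd (A ** C) (B ** C)"
  unfolding madd_def mmult_def by (auto intro!: ext simp: distrib_right sum.distrib)

lemma mmult_madd_right: "C ** madd (A::'v::finite mat) B = madd (C ** A) (C ** B)"
  unfolding madd_def mmult_def by (auto intro!: ext simp: distrib_left sum.distrib)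

lemma mmult_msub_left: "msub (A::'v::finite mat) B ** C = msub (A ** C) (B ** C)"
  unfolding msub_def mmult_def by (auto intro!: ext simp: left_diff_distrib sum_subtractf)

lemma mmult_msub_right: "C ** msub (A::'v::finite mat) B = msub (C ** A) (C ** B)"
  unfolding msub_def mmult_def by (auto intro!: ext simp: right_diff_distrib sum_subtractf)

lemma mmult_mzero [simp]: "(A::'v::finite mat) ** mzero = mzero" "mzero ** A = mzero"
  unfolding mzero_def mmult_def by auto

lemma mmult_linear_right:
  "(X::'v::finite mat) ** (\<lambda>s t. a * Y s t + b * Z s t) = (\<lambda>s t. a * (X ** Y) s t + b * (X ** Z) s t)"
  unfolding mmult_def by (auto intro!: ext simp: distrib_left sum.distrib sum_distrib_left mult_ac)

lemma mmult_sum_left: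
  "(\<lambda>u v. \<Sum>e\<in>I. (F e::'v::finite mat) u v) ** X = (\<lambda>u v. \<Sum>e\<in>I. (F e ** X) u v)"
  unfolding mmult_def by (simp add: sum_distrib_right) (rule ext, rule ext, rule sum.swap)

lemma mmult_sum_right:
  "(X::'v::finite mat) ** (\<lambda>s t. \<Sum>i\<in>I. F i s t) = (\<lambda>s t. \<Sum>i\<in>I. (X ** F i) s t)"
  unfolding mmult_def by (simp add: sum_distrib_left) (rule ext, rule ext, rule sum.swap)

lemma on_reg_mzero [simp]: "on_reg W mzero"
  by (simp add: on_reg_def mzero_def)

lemma on_reg_UNIV [simp]: "on_reg UNIV A"
  by (simp add: on_reg_def supp_in_def)

lemma on_reg_idW: "on_reg W (idW W)"
  by (auto simp: on_reg_def idW_def)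

lemma on_reg_mmult: "on_reg W A \<Longrightarrow> on_reg W B \<Longrightarrow> on_reg W ((A::'v::finite mat) ** B)"
  unfolding on_reg_def mmult_def by (metis (no_types, lifting) mult_eq_0_iff sum.neutral)

lemma on_reg_madj: "on_reg W A \<Longrightarrow> on_reg W (madj A)"
  unfolding on_reg_def madj_def by auto

lemma on_reg_msub: "on_reg W A \<Longrightarrow> on_reg W B \<Longrightarrow> on_reg W (msub A B)"
  unfolding on_reg_def msub_def by (metis diff_zero)

lemma on_reg_madd: "on_reg W A \<Longrightarrow> on_reg W B \<Longrightarrow> on_reg W (madd A B)"
  unfolding on_reg_def madd_def by (metis add.right_neutral)

lemma idW_mmult: assumes "on_reg W A" shows "idW W ** (A::'v::finite mat) = A"
proof -
  have "(\<Sum>u\<in>UNIV. (if s = u \<and> supp_in W s then 1 else 0) * A u t) = A s t" for s t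
    using assms unfolding on_reg_def
    by (cases "supp_in W s") (auto simp: if_distrib[where f="\<lambda>x. x * _"] cong: if_cong)
  then show ?thesis unfolding idW_def mmult_def by auto
qed

lemma mmult_idW: assumes "on_reg W A" shows "(A::'v::finite mat) ** idW W = A"
proof -
  have "(\<Sum>u\<in>UNIV. A s u * (if u = t \<and> supp_in W u then 1 else 0)) = A s t" for s t
  proof -
    have "(\<Sum>u\<in>UNIV. A s u * (if u = t \<and> supp_in W u then 1 else 0))
        = (\<Sum>u\<in>UNIV. if u = t then (if supp_in W t then A s t else 0) else 0)"
      by (rule sum.cong) auto
    then show ?thesis using assms unfolding on_reg_def by auto
  qed
  then show ?thesis unfolding idW_def mmult_def by auto
qed

lemma idW_UNIV_mmult [simp]: "idW UNIV ** (A::'v::finite mat) = A"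
  by (simp add: idW_mmult)

lemma mmult_idW_UNIV [simp]: "(A::'v::finite mat) ** idW UNIV = A"
  by (simp add: mmult_idW)

lemma madj_idW [simp]: "madj (idW W) = idW W"
  by (auto simp: madj_def idW_def intro!: ext)

definition ket :: "'v st \<Rightarrow> 'v vec" where
  "ket t = (\<lambda>s. if s = t then 1 else 0)"

lemma mv_ket: "mv (A::'v::finite mat) (ket t) = (\<lambda>s. A s t)"
  unfolding mv_def ket_def by (auto simp: if_distrib[where f="\<lambda>x. _ * x"] cong: if_cong)

lemma mat_eqI_mv_ket:
  assumes "\<And>t. mv (A::'v::finite mat) (ket t) = mv B (ket t)" shows "A = B"
  using assms by (auto simp: mv_ket fun_eq_iff)

lemma mv_add: "mv (A::'v::finite mat) (\<lambda>s. x s + y s) = (\<lambda>s. mv A x s + mv A y s)"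
  unfolding mv_def by (auto simp: distrib_left sum.distrib)

lemma mv_scale: "mv (A::'v::finite mat) (\<lambda>s. c * x s) = (\<lambda>s. c * mv A x s)"
  unfolding mv_def by (auto simp: sum_distrib_left mult.left_commute)

lemma mv_zero: "mv (A::'v::finite mat) (\<lambda>s. 0) = (\<lambda>s. 0)"
  unfolding mv_def by auto

lemma mv_msub: "mv (msub (A::'v::finite mat) B) x = (\<lambda>s. mv A x s - mv B x s)"
  unfolding mv_def msub_def by (auto simp: left_diff_distrib sum_subtractf)

definition vec_on :: "'v set \<Rightarrow> 'v vec \<Rightarrow> bool" where
  "vec_on W x \<longleftrightarrow> (\<forall>s. x s \<noteq> 0 \<longrightarrow> supp_in W s)"

lemma mv_idW: "vec_on W x \<Longrightarrow> mv (idW W) (x::'v::finite vec) = x"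
proof
  fix s assume "vec_on W x"
  moreover have "mv (idW W) x s = (\<Sum>t\<in>UNIV. if t = s then (if supp_in W s then x s else 0) else 0)"
    unfolding mv_def idW_def by (rule sum.cong) auto
  ultimately show "mv (idW W) x s = x s" by (auto simp: vec_on_def)
qed

lemma mv_madd: "mv (madd (A::'v::finite mat) B) x = (\<lambda>s. mv A x s + mv B x s)"
  unfolding mv_def madd_def by (auto simp: distrib_right sum.distrib)

lemma mtrace_comm: "mtrace ((A::'v::finite mat) ** B) = mtrace (B ** A)"
  unfolding mtrace_def mmult_def by (subst sum.swap) (simp add: mult.commute)

lemma mtrace_madd: "mtrace (madd A B) = mtrace (A::'v::finite mat) + mtrace B"
  unfolding mtrace_def madd_def by (simp add: sum.distrib)

lemma mtrace_msub: "mtrace (msub A B) = mtrace (A::'v::finite mat) - mtrace B"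
  unfolding mtrace_def msub_def by (simp add: sum_subtractf)

lemma mtrace_mzero [simp]: "mtrace (mzero::'v::finite mat) = 0"
  unfolding mtrace_def mzero_def by simp

lemma mtrace_scale: "mtrace (\<lambda>s t. c * (A::'v::finite mat) s t) = c * mtrace A"
  unfolding mtrace_def by (simp add: sum_distrib_left)

lemma mtrace_sum: "mtrace (\<lambda>s t. \<Sum>i\<in>I. (F i::'v::finite mat) s t) = (\<Sum>i\<in>I. mtrace (F i))"
  unfolding mtrace_def by (rule sum.swap)

lemma ran_mmult: "ran ((A::'v::finite mat) ** B) = mv A ` ran B"
  unfolding ran_def by (auto simp: mv_mmult image_iff)

lemma ran_mmult_subset: "ran ((A::'v::finite mat) ** B) \<subseteq> ran A"
  unfolding ran_def by (auto simp: mv_mmult)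

lemma zero_in_ran: "(\<lambda>s. 0) \<in> ran (A::'v::finite mat)"
  unfolding ran_def by (rule image_eqI[where x="\<lambda>s. 0"]) (simp_all add: mv_zero)

lemma ran_mzero: "ran (mzero::'v::finite mat) = {\<lambda>s. 0}"
  unfolding ran_def mv_def mzero_def by auto

lemma mv_mem_ran: "mv (A::'v::finite mat) y \<in> ran A"
  unfolding ran_def by auto

lemma vec_on_ran:
  assumes "on_reg W A" "y \<in> ran (A::'v::finite mat)" shows "vec_on W y"
  unfolding vec_on_def
proof (intro allI impI)
  fix s assume "y s \<noteq> 0"
  moreover obtain x where "y = mv A x" using assms(2) unfolding ran_def by auto
  ultimately obtain t where "A s t \<noteq> 0" unfolding mv_def
    by (metis (no_types, lifting) mult_eq_0_iff sum.neutral)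
  then show "supp_in W s" using assms(1) unfolding on_reg_def by auto
qed

lemma mem_ran_idem_iff: "(P::'v::finite mat) ** P = P \<Longrightarrow> x \<in> ran P \<longleftrightarrow> mv P x = x"
  unfolding ran_def by (metis mv_mmult range_eqI rangeE)

lemma ran_subset_idem_iff:
  assumes "(P::'v::finite mat) ** P = P"
  shows "ran A \<subseteq> ran P \<longleftrightarrow> P ** A = A"
proof
  assume "ran A \<subseteq> ran P"
  then have "mv P (mv A (ket t)) = mv A (ket t)" for t
    using mem_ran_idem_iff[OF assms] mv_mem_ran by blast
  then show "P ** A = A" by (intro mat_eqI_mv_ket) (simp add: mv_mmult)
next
  assume "P ** A = A"
  then show "ran A \<subseteq> ran P" using ran_mmult_subset by metis
qed

lemma is_projD: assumes "is_proj W P"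
  shows "on_reg W P" "P ** P = P" "madj P = P"
  using assms by (auto simp: is_proj_def)

lemma is_proj_mzero: "is_proj W (mzero :: 'v::finite mat)"
  by (simp add: is_proj_def)

lemma is_proj_idW: "is_proj W (idW W :: 'v::finite mat)"
  unfolding is_proj_def using on_reg_idW idW_mmult[OF on_reg_idW] by auto

lemma is_proj_pcomp: assumes "is_proj W P" shows "is_proj W (pcomp W P)"
proof -
  note P = is_projD[OF assms]
  have "pcomp W P ** pcomp W P = pcomp W P"
    unfolding pcomp_def using P on_reg_idW[of W]
    by (simp add: mmult_msub_left mmult_msub_right idW_mmult mmult_idW)
       (auto simp: msub_def intro!: ext)
  then show ?thesis using P on_reg_idW[of W] unfolding is_proj_def pcomp_def
    by (auto simp: on_reg_msub madj_msub)
qed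

lemma mv_pcomp: "vec_on W y \<Longrightarrow> mv (pcomp W P) y = (\<lambda>s. y s - mv P y s)"
  unfolding pcomp_def mv_msub by (simp add: mv_idW)

lemma proj_mv_pcomp:
  assumes "is_proj W (P::'v::finite mat)" shows "mv P (mv (pcomp W P) y) = (\<lambda>s. 0)"
proof -
  have "P ** pcomp W P = mzero"
    using is_projD[OF assms] unfolding pcomp_def
    by (simp add: mmult_msub_right mmult_idW) (auto simp: msub_def mzero_def)
  then have "mv (P ** pcomp W P) y = (\<lambda>s. 0)" by (simp add: mv_def mzero_def)
  then show ?thesis by (simp only: mv_mmult)
qed

lemma proj_eqI_ran:
  assumes "is_proj W P" "is_proj W (Q::'v::finite mat)" "ran P = ran Q"
  shows "P = Q"
proof -
  have "P ** Q = Q" "Q ** P = P"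
    using assms ran_subset_idem_iff unfolding is_proj_def by auto
  then show ?thesis using assms unfolding is_proj_def by (metis madj_mmult)
qed

lemma proj_eq_mzeroI: "ran (A::'v::finite mat) \<subseteq> ran mzero \<Longrightarrow> A = mzero"
proof -
  assume "ran A \<subseteq> ran mzero"
  then have "mzero ** A = A" by (subst ran_subset_idem_iff[symmetric]) simp_all
  then show "A = mzero" by simp
qed

lemma proj_eq_idWI: assumes "is_proj W (B::'v::finite mat)" "ran (idW W) \<subseteq> ran B" shows "B = idW W"
proof -
  have "ran B \<subseteq> ran (idW W)" using idW_mmult[OF is_projD(1)[OF assms(1)]] ran_mmult_subset by metis
  then show ?thesis using proj_eqI_ran[OF assms(1) is_proj_idW] assms(2) by blast
qed

definition agree :: "'v set \<Rightarrow> 'v st \<Rightarrow> 'v st \<Rightarrow> bool" where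
  "agree q s t \<longleftrightarrow> (\<forall>x. x \<notin> q \<longrightarrow> s x = t x)"

lemma agree_commute: "agree q s t \<longleftrightarrow> agree q t s"
  unfolding agree_def by auto

lemma agree_trans: "agree q s t \<Longrightarrow> agree q t u \<Longrightarrow> agree q s u"
  unfolding agree_def by auto

lemma agree_merge: "agree q (merge q v s) s" "agree q s (merge q v s)"
  unfolding agree_def merge_def by auto

lemma restr_merge: "supp_in q v \<Longrightarrow> restr q (merge q v s) = v"
  unfolding restr_def merge_def supp_in_def by (auto intro!: ext)

lemma merge_restr: "agree q u s \<Longrightarrow> merge q (restr q u) s = u"
  unfolding agree_def merge_def restr_def by (auto intro!: ext)

lemma supp_in_UNIV [simp]: "supp_in UNIV s"
  by (simp add: supp_in_def)

lemma supp_in_restr: "supp_in q (restr q s)"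
  unfolding supp_in_def restr_def by auto

lemma ext_apply: "ext q B s t = (if agree q s t then B (restr q s) (restr q t) else 0)"
  unfolding ext_def ext_within_def agree_def supp_in_def by auto

lemma sum_agree_eq_sum_merge:
  fixes f :: "'v::finite st \<Rightarrow> 'a::comm_monoid_add"
  shows "(\<Sum>u\<in>{u. agree q u s}. f u) = (\<Sum>v\<in>{v. supp_in q v}. f (merge q v s))"
proof -
  have "bij_betw (\<lambda>v. merge q v s) {v. supp_in q v} {u. agree q u s}"
    by (rule bij_betw_byWitness[where f'="restr q"])
       (auto simp: restr_merge merge_restr agree_merge supp_in_restr)
  then show ?thesis by (simp add: sum.reindex_bij_betw[symmetric])
qed

lemma sum_supp_in_eq_sum_UNIV:
  fixes f :: "'v::finite st \<Rightarrow> 'a::comm_monoid_add"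
  assumes "\<And>v. \<not> supp_in q v \<Longrightarrow> f v = 0"
  shows "(\<Sum>v\<in>{v. supp_in q v}. f v) = (\<Sum>v\<in>UNIV. f v)"
  by (rule sum.mono_neutral_left) (auto simp: assms)

lemma ext_mmult:
  assumes A: "on_reg q A"
  shows "ext q ((A::'v::finite mat) ** B) = ext q A ** ext q B"
proof (rule ext, rule ext)
  fix s t
  show "ext q (A ** B) s t = (ext q A ** ext q B) s t"
  proof (cases "agree q s t")
    case True
    have "(ext q A ** ext q B) s t = (\<Sum>u\<in>{u. agree q u s}. ext q A s u * ext q B u t)"
      unfolding mmult_def by (rule sum.mono_neutral_right) (auto simp: ext_apply agree_commute)
    also have "\<dots> = (\<Sum>v\<in>{v. supp_in q v}. ext q A s (merge q v s) * ext q B (merge q v s) t)"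
      by (rule sum_agree_eq_sum_merge)
    also have "\<dots> = (\<Sum>v\<in>{v. supp_in q v}. A (restr q s) v * B v (restr q t))"
      using True by (intro sum.cong) (auto simp: ext_apply agree_merge restr_merge
            intro: agree_trans[OF agree_merge(1)])
    also have "\<dots> = (\<Sum>v\<in>UNIV. A (restr q s) v * B v (restr q t))"
      by (rule sum_supp_in_eq_sum_UNIV) (use A in \<open>auto simp: on_reg_def\<close>)
    finally show ?thesis using True by (simp add: ext_apply mmult_def)
  next
    case False
    then have "ext q A s u * ext q B u t = 0" for u
      using agree_trans unfolding ext_apply by fastforce
    then have "(ext q A ** ext q B) s t = 0" unfolding mmult_def by (intro sum.neutral) blast
    then show ?thesis using False by (simp add: ext_apply)
  qed
qed

lemma ext_madj: "ext q (madj A) = madj (ext q A)"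
  by (auto intro!: ext simp: ext_apply madj_def agree_commute)

lemma ext_msub: "ext q (msub A B) = msub (ext q A) (ext q B)"
  by (auto intro!: ext simp: ext_apply msub_def)

lemma ext_mzero [simp]: "ext q mzero = mzero"
  by (auto intro!: ext simp: ext_apply mzero_def)

lemma ext_sum: "ext q (\<lambda>s t. \<Sum>i\<in>I. F i s t) = (\<lambda>s t. \<Sum>i\<in>I. ext q (F i) s t)"
  by (auto intro!: ext simp: ext_apply)

lemma ext_idW: "ext q (idW q) = idW UNIV"
proof -
  have "agree q s t \<and> restr q s = restr q t \<longleftrightarrow> s = t" for s t
    unfolding agree_def restr_def fun_eq_iff by metis
  then have "ext q (idW q) s t = idW UNIV s t" for s t
    using supp_in_restr[of q s] by (auto simp: ext_apply idW_def)
  then show ?thesis by blast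
qed

lemma ext_pcomp: "ext q (pcomp q P) = pcomp UNIV (ext q P)"
  by (simp add: pcomp_def ext_msub ext_idW)

lemma is_proj_ext: "is_proj q P \<Longrightarrow> is_proj UNIV (ext q P)"
  unfolding is_proj_def by (auto simp: ext_mmult[symmetric] ext_madj[symmetric])

lemma models_ext_iff: "is_proj q A \<Longrightarrow> models \<rho> (ext q A) \<longleftrightarrow> ext q A ** \<rho> = \<rho>"
  unfolding models_def by (rule ran_subset_idem_iff) (use is_proj_ext is_projD in blast)

lemma ext_mmult_absorb:
  assumes "on_reg q A" "is_proj q B" "ran A \<subseteq> ran B"
  shows "ext q B ** ext q A = ext q A"
  using assms ran_subset_idem_iff[of B A] by (simp add: is_proj_def ext_mmult[symmetric])

definition is_subspace :: "'v set \<Rightarrow> 'v vec set \<Rightarrow> bool" where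
  "is_subspace W S \<longleftrightarrow> (\<lambda>s. 0) \<in> S \<and> (\<forall>x\<in>S. \<forall>y\<in>S. (\<lambda>s. x s + y s) \<in> S)
     \<and> (\<forall>c. \<forall>x\<in>S. (\<lambda>s. c * x s) \<in> S) \<and> (\<forall>x\<in>S. vec_on W x)"

lemma subspace_add: "is_subspace W S \<Longrightarrow> x \<in> S \<Longrightarrow> y \<in> S \<Longrightarrow> (\<lambda>s. x s + y s) \<in> S"
  unfolding is_subspace_def by blast

lemma subspace_scale: "is_subspace W S \<Longrightarrow> x \<in> S \<Longrightarrow> (\<lambda>s. c * x s) \<in> S"
  unfolding is_subspace_def by blast

lemma subspace_diff: "is_subspace W S \<Longrightarrow> x \<in> S \<Longrightarrow> y \<in> S \<Longrightarrow> (\<lambda>s. x s - y s) \<in> S"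
  using subspace_add[of W S x "\<lambda>s. (-1) * y s"] subspace_scale[of W S y "-1"] by simp

lemma subspace_inter: "is_subspace W S \<Longrightarrow> is_subspace W T \<Longrightarrow> is_subspace W (S \<inter> T)"
  unfolding is_subspace_def by blast

lemma vec_sum_memI: "x \<in> S \<Longrightarrow> y \<in> T \<Longrightarrow> (\<lambda>s. x s + y s) \<in> {(\<lambda>s. x s + y s) | x y. x \<in> S \<and> y \<in> T}"
  by blast

lemma subspace_sum:
  assumes S: "is_subspace W S" and T: "is_subspace W T"
  shows "is_subspace W {(\<lambda>s. x s + y s) | x y. x \<in> S \<and> y \<in> T}"
  unfolding is_subspace_def
proof (intro conjI ballI allI)
  let ?U = "{(\<lambda>s. x s + y s) | x y. x \<in> S \<and> y \<in> T}"
  have "(\<lambda>s. 0) \<in> S" "(\<lambda>s. 0) \<in> T" using S T unfolding is_subspace_def by blast+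
  from vec_sum_memI[OF this] show "(\<lambda>s. 0) \<in> ?U" by simp
  fix u assume "u \<in> ?U"
  then obtain x1 y1 where u: "u = (\<lambda>s. x1 s + y1 s)" "x1 \<in> S" "y1 \<in> T" by blast
  have "vec_on W x1" "vec_on W y1" using u S T unfolding is_subspace_def by blast+
  then show "vec_on W u" unfolding u(1) vec_on_def by (metis add.right_neutral add_0)
  fix c
  from vec_sum_memI[OF subspace_scale[OF S u(2)] subspace_scale[OF T u(3)]]
  show "(\<lambda>s. c * u s) \<in> ?U" unfolding u(1) by (simp add: distrib_left)
  fix v assume "v \<in> ?U"
  then obtain x2 y2 where v: "v = (\<lambda>s. x2 s + y2 s)" "x2 \<in> S" "y2 \<in> T" by blast
  from vec_sum_memI[OF subspace_add[OF S u(2) v(2)] subspace_add[OF T u(3) v(3)]]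
  show "(\<lambda>s. u s + v s) \<in> ?U" unfolding u(1) v(1) by (simp add: algebra_simps)
qed

lemma subspace_ran: assumes "on_reg W (A::'v::finite mat)" shows "is_subspace W (ran A)"
proof -
  have "\<forall>x\<in>ran A. vec_on W x" using vec_on_ran[OF assms] by blast
  then show ?thesis unfolding is_subspace_def using zero_in_ran
    by (auto simp: ran_def simp flip: mv_add mv_scale)
qed

definition vinner :: "'v::finite vec \<Rightarrow> 'v vec \<Rightarrow> complex" where
  "vinner x y = (\<Sum>s\<in>UNIV. cnj (x s) * y s)"

lemma cnj_mult_self: "cnj z * z = complex_of_real ((cmod z)^2)"
  by (metis complex_norm_square mult.commute)

lemma vinner_self: "vinner w w = of_real (\<Sum>s\<in>UNIV. (cmod (w s))^2)"
  unfolding vinner_def of_real_sum by (rule sum.cong) (simp_all only: cnj_mult_self)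

lemma vinner_self_neq_0: assumes "w \<noteq> (\<lambda>s. 0)" shows "vinner w w \<noteq> 0"
proof -
  obtain s where "w s \<noteq> 0" using assms by auto
  then have "0 < (cmod (w s))^2" by simp
  also have "\<dots> \<le> (\<Sum>s\<in>UNIV. (cmod (w s))^2)" by (rule member_le_sum) auto
  finally show ?thesis unfolding vinner_self of_real_eq_0_iff by linarith
qed

lemma proj_diag:
  assumes "is_proj W (P::'v::finite mat)"
  shows "P s s = of_real (\<Sum>u\<in>UNIV. (cmod (P u s))^2)" "0 \<le> Re (P s s)" "Re (P s s) \<le> 1"
proof -
  note h = is_projD[OF assms]
  have c: "P s u = cnj (P u s)" for u using fun_cong[OF fun_cong[OF h(3)]] unfolding madj_def by simp
  have "P s s = (\<Sum>u\<in>UNIV. P s u * P u s)"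
    using fun_cong[OF fun_cong[OF h(2)], of s s] unfolding mmult_def by simp
  also have "\<dots> = (\<Sum>u\<in>UNIV. of_real ((cmod (P u s))^2))"
    by (rule sum.cong) (simp_all only: c cnj_mult_self)
  finally show e: "P s s = of_real (\<Sum>u\<in>UNIV. (cmod (P u s))^2)" by (simp only: of_real_sum)
  then show "0 \<le> Re (P s s)" by (simp add: sum_nonneg)
  have "(cmod (P s s))^2 \<le> (\<Sum>u\<in>UNIV. (cmod (P u s))^2)"
    by (rule member_le_sum) auto
  moreover have "cmod (P s s) = (\<Sum>u\<in>UNIV. (cmod (P u s))^2)"
    unfolding e norm_of_real by (simp add: sum_nonneg)
  ultimately have "(cmod (P s s))^2 \<le> cmod (P s s)" by simp
  then have "cmod (P s s) \<le> 1"
    using mult_le_cancel_left_pos[of "cmod (P s s)" "cmod (P s s)" 1]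
    by (cases "P s s = 0") (simp_all add: power2_eq_square)
  then show "Re (P s s) \<le> 1" using complex_Re_le_cmod order_trans by blast
qed

lemma Re_mtrace_proj_le:
  "is_proj W (P::'v::finite mat) \<Longrightarrow> Re (mtrace P) \<le> real (card (UNIV :: 'v st set))"
proof -
  assume P: "is_proj W P"
  have "(\<Sum>s\<in>UNIV. Re (P s s)) \<le> (\<Sum>s\<in>(UNIV::'v st set). 1)"
    by (rule sum_mono) (rule proj_diag(3)[OF P])
  then show ?thesis by (simp add: mtrace_def)
qed

definition rank_one_proj :: "'v::finite vec \<Rightarrow> 'v mat" where
  "rank_one_proj w = (\<lambda>s t. w s * cnj (w t) / vinner w w)"

lemma is_proj_madd:
  assumes P: "is_proj W (P::'v::finite mat)" and R: "is_proj W R"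
    and PR: "P ** R = mzero" and RP: "R ** P = mzero"
  shows "is_proj W (madd P R)"
proof -
  note P = is_projD[OF P] and R = is_projD[OF R]
  have "madd P R ** madd P R = madd P R"
    by (simp add: mmult_madd_left mmult_madd_right PR RP P(2) R(2)) (auto simp: madd_def mzero_def)
  then show ?thesis using P R by (simp add: is_proj_def on_reg_madd madj_madd)
qed

lemma is_proj_rank_one_proj:
  assumes w0: "w \<noteq> (\<lambda>s. 0)" and wW: "vec_on W w"
  shows "is_proj W (rank_one_proj w)"
proof -
  have n: "vinner w w \<noteq> 0" by (rule vinner_self_neq_0[OF w0])
  have "(\<Sum>u\<in>UNIV. (w s * cnj (w u) / vinner w w) * (w u * cnj (w t) / vinner w w))
      = w s * cnj (w t) * vinner w w / (vinner w w * vinner w w)" for s t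
    by (simp add: vinner_def sum_divide_distrib sum_distrib_left sum_distrib_right algebra_simps)
  then have "rank_one_proj w ** rank_one_proj w = rank_one_proj w"
    unfolding mmult_def rank_one_proj_def using n by auto
  moreover have "cnj (vinner w w) = vinner w w" by (simp add: vinner_self)
  then have "madj (rank_one_proj w) = rank_one_proj w"
    unfolding madj_def rank_one_proj_def by (auto intro!: ext simp: mult.commute)
  moreover have "on_reg W (rank_one_proj w)"
    using wW unfolding on_reg_def rank_one_proj_def vec_on_def by auto
  ultimately show ?thesis by (simp add: is_proj_def)
qed

lemma rank_one_proj_orthogonal:
  assumes P: "is_proj W (P::'v::finite mat)" and Pw: "mv P w = (\<lambda>s. 0)"
  shows "P ** rank_one_proj w = mzero" "rank_one_proj w ** P = mzero"
proof -
  have c: "cnj (P s u) = P u s" for s u using fun_cong[OF fun_cong[OF is_projD(3)[OF P]]]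
    unfolding madj_def by simp
  have Pw': "(\<Sum>u\<in>UNIV. P s u * w u) = 0" for s using fun_cong[OF Pw] unfolding mv_def by simp
  then have wP: "(\<Sum>u\<in>UNIV. cnj (w u) * P u t) = 0" for t
    using cnj_sum[of "\<lambda>u. P t u * w u" UNIV] by (simp add: c mult.commute)
  have "(\<Sum>u\<in>UNIV. P s u * (w u * cnj (w t) / vinner w w))
      = (\<Sum>u\<in>UNIV. P s u * w u) * cnj (w t) / vinner w w" for s t
    by (simp add: sum_divide_distrib sum_distrib_right mult.assoc)
  then show "P ** rank_one_proj w = mzero"
    unfolding mmult_def rank_one_proj_def mzero_def using Pw' by auto
  have "(\<Sum>u\<in>UNIV. (w s * cnj (w u) / vinner w w) * P u t)
      = w s * (\<Sum>u\<in>UNIV. cnj (w u) * P u t) / vinner w w" for s t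
    by (simp add: sum_divide_distrib sum_distrib_left mult.assoc)
  then show "rank_one_proj w ** P = mzero"
    unfolding mmult_def rank_one_proj_def mzero_def using wP by auto
qed

lemma mtrace_rank_one_proj: "w \<noteq> (\<lambda>s. 0) \<Longrightarrow> mtrace (rank_one_proj w) = 1"
  unfolding mtrace_def rank_one_proj_def using vinner_self_neq_0
  by (simp add: vinner_def sum_divide_distrib[symmetric] mult.commute)

lemma mv_rank_one_proj: "mv (rank_one_proj w) x = (\<lambda>s. (vinner w x / vinner w w) * w s)"
  unfolding mv_def rank_one_proj_def vinner_def
  by (auto intro!: ext simp: sum_divide_distrib sum_distrib_left algebra_simps)

text \<open>Gram--Schmidt: as long as the range of \<open>P\<close> is a proper subspace of \<open>S\<close>, adding the
  projector onto the component orthogonal to \<open>ran P\<close> of some \<open>v \<in> S\<close> raises the trace by one.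
  Since traces of projectors are bounded, \<open>S\<close> is eventually reached.\<close>

lemma proj_grow_in_subspace:
  assumes S: "is_subspace W S" and P: "is_proj W (P::'v::finite mat)" "ran P \<subseteq> S"
    and v: "v \<in> S" "v \<notin> ran P"
  shows "\<exists>P'. is_proj W P' \<and> ran P' \<subseteq> S \<and> mtrace P' = mtrace P + 1"
proof -
  define w where "w = (\<lambda>s. v s - mv P v s)"
  have Pv: "mv P v \<in> ran P" by (rule mv_mem_ran)
  have wS: "w \<in> S" unfolding w_def using subspace_diff[OF S v(1)] Pv P(2) by auto
  have "mv P (mv P v) = mv P v" by (simp flip: mv_mmult add: is_projD(2)[OF P(1)])
  then have Pw: "mv P w = (\<lambda>s. 0)"
    unfolding w_def using mv_add[of P v "\<lambda>s. - mv P v s"] mv_scale[of P "-1" "mv P v"]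
    by (auto intro!: ext)
  have w0: "w \<noteq> (\<lambda>s. 0)"
  proof
    assume "w = (\<lambda>s. 0)"
    then have "v = mv P v" unfolding w_def by (simp add: fun_eq_iff)
    then show False using v Pv by simp
  qed
  have wW: "vec_on W w" using wS S unfolding is_subspace_def by blast
  let ?R = "rank_one_proj w"
  have "ran (madd P ?R) \<subseteq> S"
  proof
    fix y assume "y \<in> ran (madd P ?R)"
    then obtain x where x: "y = mv (madd P ?R) x" unfolding ran_def by auto
    have "mv P x \<in> S" using P(2) mv_mem_ran by blast
    from subspace_add[OF S this subspace_scale[OF S wS]] show "y \<in> S"
      unfolding x mv_madd mv_rank_one_proj .
  qed
  moreover have "is_proj W (madd P ?R)"
    using is_proj_madd[OF P(1) is_proj_rank_one_proj[OF w0 wW] rank_one_proj_orthogonal[OF P(1) Pw]] .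
  moreover have "mtrace (madd P ?R) = mtrace P + 1"
    by (simp add: mtrace_madd mtrace_rank_one_proj[OF w0])
  ultimately show ?thesis by blast
qed

lemma proj_subspace_trace_or_onto:
  assumes S: "is_subspace W (S::'v::finite vec set)"
  shows "(\<exists>P. is_proj W P \<and> ran P \<subseteq> S \<and> Re (mtrace P) = real k) \<or> (\<exists>P. is_proj W P \<and> ran P = S)"
proof (induction k)
  case 0
  have "ran (mzero::'v mat) \<subseteq> S" using S unfolding is_subspace_def ran_mzero by auto
  then show ?case using is_proj_mzero by fastforce
next
  case (Suc k)
  then show ?case using proj_grow_in_subspace[OF S] by fastforce
qed

lemma proj_onto_subspace:
  assumes "is_subspace W (S::'v::finite vec set)"
  shows "is_proj W (proj_onto W S)" "ran (proj_onto W S) = S"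
proof -
  obtain P where P: "is_proj W P" "ran P = S"
    using proj_subspace_trace_or_onto[OF assms, of "Suc (card (UNIV :: 'v st set))"] Re_mtrace_proj_le
    by fastforce
  have "(THE P. is_proj W P \<and> ran P = S) = P"
    by (rule the_equality) (use P proj_eqI_ran in auto)
  then show "is_proj W (proj_onto W S)" "ran (proj_onto W S) = S" using P by (auto simp: proj_onto_def)
qed

lemma is_proj_pmeet: "is_proj W P \<Longrightarrow> is_proj W Q \<Longrightarrow> is_proj W (pmeet W P Q)"
  and ran_pmeet: "is_proj W P \<Longrightarrow> is_proj W Q \<Longrightarrow> ran (pmeet W P Q) = ran P \<inter> ran Q"
  unfolding pmeet_def by (intro proj_onto_subspace subspace_inter subspace_ran is_projD(1); assumption)+

lemma is_proj_pjoin: "is_proj W P \<Longrightarrow> is_proj W Q \<Longrightarrow> is_proj W (pjoin W P Q)"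
  and ran_pjoin: "is_proj W P \<Longrightarrow> is_proj W Q \<Longrightarrow>
    ran (pjoin W P Q) = {(\<lambda>s. x s + y s) | x y. x \<in> ran P \<and> y \<in> ran Q}"
  unfolding pjoin_def by (intro proj_onto_subspace subspace_sum subspace_ran is_projD(1); assumption)+

lemma is_proj_sasaki_imp: "is_proj W P \<Longrightarrow> is_proj W Q \<Longrightarrow> is_proj W (sasaki_imp W P Q)"
  unfolding sasaki_imp_def by (intro is_proj_pjoin is_proj_pmeet is_proj_pcomp)

lemma is_proj_sasaki_conj: "is_proj W P \<Longrightarrow> is_proj W Q \<Longrightarrow> is_proj W (sasaki_conj W P Q)"
  unfolding sasaki_conj_def by (intro is_proj_pjoin is_proj_pmeet is_proj_pcomp)

lemma sasaki_imp_mp: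
  assumes P: "is_proj W P" and Q: "is_proj W Q" and y: "y \<in> ran (sasaki_imp W P Q)"
  shows "mv P y \<in> ran Q"
proof -
  obtain a b where ab: "y = (\<lambda>s. a s + b s)" "a \<in> ran (pcomp W P)" "b \<in> ran (pmeet W P Q)"
    using y unfolding sasaki_imp_def ran_pjoin[OF is_proj_pcomp[OF P] is_proj_pmeet[OF P Q]] by blast
  have b: "b \<in> ran P" "b \<in> ran Q" using ab(3) ran_pmeet[OF P Q] by auto
  obtain z where "a = mv (pcomp W P) z" using ab(2) unfolding ran_def by blast
  then have "mv P y = b"
    unfolding ab(1) mv_add using proj_mv_pcomp[OF P] mem_ran_idem_iff[OF is_projD(2)[OF P]] b(1)
    by simp
  then show ?thesis using b by simp
qed

lemma sasaki_imp_intro: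
  assumes P: "is_proj W P" and Q: "is_proj W Q" and y: "vec_on W y" "mv P y \<in> ran Q"
  shows "y \<in> ran (sasaki_imp W P Q)"
proof -
  have "(\<lambda>s. y s - mv P y s) \<in> ran (pcomp W P)"
    using mv_mem_ran[of "pcomp W P" y] unfolding mv_pcomp[OF y(1)] .
  moreover have "mv P y \<in> ran (pmeet W P Q)" using ran_pmeet[OF P Q] mv_mem_ran y(2) by auto
  ultimately have "(\<lambda>s. (y s - mv P y s) + mv P y s) \<in> ran (pjoin W (pcomp W P) (pmeet W P Q))"
    unfolding ran_pjoin[OF is_proj_pcomp[OF P] is_proj_pmeet[OF P Q]] by (rule vec_sum_memI)
  then show ?thesis unfolding sasaki_imp_def by simp
qed

lemma sasaki_conj_intro:
  assumes P: "is_proj W P" and Q: "is_proj W Q" and y: "y \<in> ran Q"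
  shows "mv P y \<in> ran (sasaki_conj W P Q)"
proof -
  have "(\<lambda>s. y s - mv P y s) \<in> ran (pcomp W P)"
    using mv_mem_ran[of "pcomp W P" y] unfolding mv_pcomp[OF vec_on_ran[OF is_projD(1)[OF Q] y]] .
  then have "(\<lambda>s. (-1) * (y s - mv P y s)) \<in> ran (pcomp W P)"
    by (rule subspace_scale[OF subspace_ran[OF is_projD(1)[OF is_proj_pcomp[OF P]]]])
  from vec_sum_memI[OF this y]
  have "(\<lambda>s. (-1) * (y s - mv P y s) + y s) \<in> ran (pjoin W (pcomp W P) Q)"
    unfolding ran_pjoin[OF is_proj_pcomp[OF P] Q] .
  then show ?thesis
    using mv_mem_ran ran_pmeet[OF P is_proj_pjoin[OF is_proj_pcomp[OF P] Q]]
    unfolding sasaki_conj_def by simp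
qed

lemma ran_mmult_subset_if_sasaki_imp:
  assumes "is_proj W P" "is_proj W Q" "ran A \<subseteq> ran (sasaki_imp W P Q)"
  shows "ran (P ** A) \<subseteq> ran Q"
  unfolding ran_mmult using sasaki_imp_mp[OF assms(1,2)] assms(3) by blast

lemma ran_subset_sasaki_imp:
  assumes "is_proj W P" "is_proj W Q" "on_reg W A" "ran (P ** A) \<subseteq> ran Q"
  shows "ran A \<subseteq> ran (sasaki_imp W P Q)"
  using sasaki_imp_intro[OF assms(1,2) vec_on_ran[OF assms(3)]] assms(4) unfolding ran_mmult by blast

lemma ran_mmult_subset_sasaki_conj:
  assumes "is_proj W P" "is_proj W Q" "ran A \<subseteq> ran Q"
  shows "ran (P ** A) \<subseteq> ran (sasaki_conj W P Q)"
  unfolding ran_mmult using sasaki_conj_intro[OF assms(1,2)] assms(3) by blast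

lemma qf_eq_vinner: "qf (A::'v::finite mat) x = vinner x (mv A x)"
  unfolding qf_def vinner_def mv_def by (simp add: sum_distrib_left mult.assoc)

lemma vinner_mv_madj: "vinner x (mv (A::'v::finite mat) y) = vinner (mv (madj A) x) y"
  unfolding vinner_def mv_def madj_def
  by (simp add: sum_distrib_left sum_distrib_right cnj_sum mult_ac) (rule sum.swap)

lemma vinner_add_right: "vinner x (\<lambda>s. y s + z s) = vinner x y + vinner (x::'v::finite vec) z"
  unfolding vinner_def by (simp add: distrib_left sum.distrib)

lemma vinner_scale_right: "vinner x (\<lambda>s. c * y s) = c * vinner (x::'v::finite vec) y"
  unfolding vinner_def by (simp add: sum_distrib_left mult_ac)

lemma vinner_add_left: "vinner (\<lambda>s. x s + z s) y = vinner x y + vinner (z::'v::finite vec) y"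
  unfolding vinner_def by (simp add: distrib_right sum.distrib)

lemma vinner_scale_left: "vinner (\<lambda>s. c * x s) y = cnj c * vinner (x::'v::finite vec) y"
  unfolding vinner_def by (simp add: sum_distrib_left mult_ac)

lemma cnj_vinner: "cnj (vinner x y) = vinner y (x::'v::finite vec)"
  unfolding vinner_def by (simp add: cnj_sum mult.commute)

lemma qf_expand:
  "qf (A::'v::finite mat) (\<lambda>s. x s + c * y s) =
     qf A x + c * vinner x (mv A y) + cnj c * vinner y (mv A x) + cnj c * c * qf A y"
  unfolding qf_eq_vinner mv_add mv_scale vinner_add_left vinner_add_right vinner_scale_left
    vinner_scale_right
  by (simp add: algebra_simps)

lemma vinner_ket_left: "vinner (ket s) y = (y::'v::finite vec) s"
proof -
  have "(\<Sum>u\<in>UNIV. cnj (ket s u) * y u) = (\<Sum>u\<in>UNIV. if u = s then y s else 0)"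
    by (rule sum.cong) (auto simp: ket_def)
  then show ?thesis unfolding vinner_def by simp
qed

lemma qf_ket: "qf (A::'v::finite mat) (ket s) = A s s"
  unfolding qf_eq_vinner vinner_ket_left mv_ket ..

lemma psd_diag: "psd (A::'v::finite mat) \<Longrightarrow> Im (A s s) = 0 \<and> 0 \<le> Re (A s s)"
  using qf_ket[of A s] unfolding psd_def by metis

lemma psd_hermitian: assumes "psd (A::'v::finite mat)" shows "A t s = cnj (A s t)"
proof -
  have d: "\<And>u. Im (A u u) = 0" using psd_diag[OF assms] by blast
  have q: "\<And>c. Im (qf A (\<lambda>u. ket s u + c * ket t u)) = 0" using assms unfolding psd_def by blast
  have e: "\<And>c. qf A (\<lambda>u. ket s u + c * ket t u)
      = A s s + c * A s t + cnj c * A t s + cnj c * c * A t t"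
    unfolding qf_expand qf_ket vinner_ket_left mv_ket ..
  have c1: "Im (A s t + A t s) = 0" using q[of 1] d[of s] d[of t] unfolding e by simp
  have c2: "Re (A s t - A t s) = 0" using q[of \<i>] d[of s] d[of t] unfolding e by simp
  show ?thesis using c1 c2 by (simp add: complex_eq_iff)
qed

lemma psd_madj: assumes "psd (A::'v::finite mat)" shows "madj A = A"
proof (rule ext, rule ext)
  fix s t show "madj A s t = A s t" unfolding madj_def psd_hermitian[OF assms, of t s] by simp
qed

lemma psd_vinner_swap:
  assumes "psd (A::'v::finite mat)" shows "vinner y (mv A x) = cnj (vinner x (mv A y))"
  using vinner_mv_madj[of x A y] psd_madj[OF assms] cnj_vinner by metis

text \<open>Perturbing \<open>y\<close> along \<open>ket s\<close> by a small multiple of \<open>-(A y) s\<close> would make the quadratic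
  form negative unless \<open>(A y) s = 0\<close>.\<close>

lemma psd_qf_zero_imp_mv_zero:
  assumes A: "psd (A::'v::finite mat)" and y: "qf A y = 0" shows "mv A y = (\<lambda>s. 0)"
proof
  fix s
  let ?w = "mv A y s"
  have h: "vinner (ket s) (mv A y) = ?w" by (rule vinner_ket_left)
  have h2: "vinner y (mv A (ket s)) = cnj ?w" using psd_vinner_swap[OF A, of y "ket s"] h by simp
  define a where "a = Re (A s s)"
  have a0: "0 \<le> a" using psd_diag[OF A] a_def by auto
  have Ass: "A s s = of_real a" using psd_diag[OF A, of s] a_def by (simp add: complex_eq_iff)
  define t :: real where "t = 1 / (a + 1)"
  have t0: "0 < t" using a0 t_def by simp
  have ta: "t * a < 1" unfolding t_def using a0 by (simp add: field_simps)
  define c where "c = - of_real t * ?w"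
  have "qf A (\<lambda>u. y u + c * ket s u) = 0 + c * cnj ?w + cnj c * ?w + cnj c * c * of_real a"
    by (simp only: qf_expand y qf_ket h h2 Ass)
  also have "\<dots> = of_real (- 2 * t + t * t * a) * (?w * cnj ?w)"
    unfolding c_def by (simp add: algebra_simps)
  also have "\<dots> = of_real ((- 2 * t + t * t * a) * (cmod ?w)^2)"
    unfolding complex_norm_square[symmetric] by simp
  finally have e: "Re (qf A (\<lambda>u. y u + c * ket s u)) = (- 2 * t + t * t * a) * (cmod ?w)^2" by simp
  have "0 \<le> Re (qf A (\<lambda>u. y u + c * ket s u))" using A unfolding psd_def by blast
  then have "0 \<le> (- 2 * t + t * t * a) * (cmod ?w)^2" using e by simp
  moreover have "- 2 * t + t * t * a < 0"
  proof -
    have "t * (t * a) < t * 2" using ta t0 by simp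
    then show ?thesis by (simp add: algebra_simps)
  qed
  ultimately have "(cmod ?w)^2 \<le> 0" by (simp add: zero_le_mult_iff)
  then show "?w = 0" by simp
qed

lemma psd_mtrace: "psd (A::'v::finite mat) \<Longrightarrow> Im (mtrace A) = 0 \<and> 0 \<le> Re (mtrace A)"
  unfolding mtrace_def using psd_diag[of A]
  by (auto simp: Im_sum Re_sum intro!: sum.neutral sum_nonneg)

lemma psd_mtrace_zero_imp:
  assumes A: "psd (A::'v::finite mat)" and t: "Re (mtrace A) = 0" shows "A = mzero"
proof -
  have "\<forall>s\<in>UNIV. Re (A s s) = 0"
    using t unfolding mtrace_def
    by (subst (asm) Re_sum, subst (asm) sum_nonneg_eq_0_iff) (use psd_diag[OF A] in auto)
  then have d: "\<And>s. qf A (ket s) = 0"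
    unfolding qf_ket using psd_diag[OF A] by (simp add: complex_eq_iff)
  show ?thesis
  proof (rule ext, rule ext)
    fix s t
    have "mv A (ket t) s = 0" using fun_cong[OF psd_qf_zero_imp_mv_zero[OF A d[of t]], of s] by simp
    then show "A s t = mzero s t" by (simp add: mv_ket mzero_def)
  qed
qed

text \<open>For a phase \<open>c\<close> with \<open>c * A s t = - |A s t|\<close>, positivity on \<open>ket s + c * ket t\<close> is the
  claimed inequality.\<close>

lemma psd_entry_le_diag:
  assumes A: "psd (A::'v::finite mat)" shows "2 * cmod (A s t) \<le> Re (A s s) + Re (A t t)"
proof (cases "A s t = 0")
  case True
  have "0 \<le> Re (A s s)" "0 \<le> Re (A t t)" using psd_diag[OF A] by blast+
  then show ?thesis using True by simp
next
  case nz: False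
  define c where "c = - cnj (A s t) / of_real (cmod (A s t))"
  have cc: "cnj c * c = 1" unfolding c_def using nz
    by (simp add: field_simps complex_norm_square[symmetric] power2_eq_square)
  have ca: "c * A s t = - of_real (cmod (A s t))" unfolding c_def using nz
    by (simp add: field_simps complex_norm_square[symmetric] power2_eq_square mult.commute)
  have "qf A (\<lambda>u. ket s u + c * ket t u) = A s s + c * A s t + cnj c * A t s + cnj c * c * A t t"
    unfolding qf_expand qf_ket vinner_ket_left mv_ket ..
  also have "\<dots> = A s s + A t t - 2 * of_real (cmod (A s t))"
  proof -
    have "cnj c * A t s = cnj (c * A s t)" using psd_hermitian[OF A, where s=s and t=t] by simp
    then show ?thesis using ca cc by simp
  qed
  finally have "Re (qf A (\<lambda>u. ket s u + c * ket t u)) = Re (A s s) + Re (A t t) - 2 * cmod (A s t)"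
    by simp
  moreover have "0 \<le> Re (qf A (\<lambda>u. ket s u + c * ket t u))" using A unfolding psd_def by blast
  ultimately show ?thesis by linarith
qed

lemma psd_entry_le_mtrace:
  assumes A: "psd (A::'v::finite mat)" shows "cmod (A s t) \<le> Re (mtrace A)"
proof -
  have "Re (A u u) \<le> Re (mtrace A)" for u
    unfolding mtrace_def Re_sum by (rule member_le_sum) (use psd_diag[OF A] in auto)
  from this[of s] this[of t] show ?thesis using psd_entry_le_diag[OF A, of s t] by linarith
qed

lemma qf_sandwich: "qf ((K::'v::finite mat) ** A ** madj K) x = qf A (mv (madj K) x)"
  unfolding qf_eq_vinner mv_mmult vinner_mv_madj[of x K] ..

lemma psd_sandwich: "psd (A::'v::finite mat) \<Longrightarrow> psd (K ** A ** madj K)"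
  unfolding psd_def qf_sandwich by blast

lemma qf_madd: "qf (madd (A::'v::finite mat) B) x = qf A x + qf B x"
  unfolding qf_def madd_def by (simp add: distrib_left distrib_right sum.distrib)

lemma psd_madd: "psd (A::'v::finite mat) \<Longrightarrow> psd B \<Longrightarrow> psd (madd A B)"
  unfolding psd_def qf_madd by simp

lemma psd_mzero: "psd (mzero::'v::finite mat)"
  unfolding psd_def qf_def mzero_def by simp

lemma qf_scale: "qf (\<lambda>s t. c * (A::'v::finite mat) s t) x = c * qf A x"
  unfolding qf_def by (simp add: sum_distrib_left mult_ac)

lemma psd_scale: "psd (A::'v::finite mat) \<Longrightarrow> 0 \<le> r \<Longrightarrow> psd (\<lambda>s t. complex_of_real r * A s t)"
  unfolding psd_def qf_scale by simp

lemma qf_sum: "qf (\<lambda>s t. \<Sum>i\<in>I. (F i::'v::finite mat) s t) x = (\<Sum>i\<in>I. qf (F i) x)"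
  unfolding qf_def by (simp add: sum_distrib_left sum_distrib_right sum.swap[of _ I] mult_ac)

lemma psd_sum: "(\<And>i. i \<in> I \<Longrightarrow> psd (F i::'v::finite mat)) \<Longrightarrow> psd (\<lambda>s t. \<Sum>i\<in>I. F i s t)"
  unfolding psd_def qf_sum by (simp add: Im_sum Re_sum sum_nonneg)

lemma kraus_Cons: "kraus (A # As) \<rho> = madd (A ** \<rho> ** madj A) (kraus As \<rho>)"
  unfolding kraus_def madd_def by simp

lemma kraus_Nil: "kraus [] \<rho> = mzero"
  unfolding kraus_def mzero_def by simp

lemma psd_kraus: "psd (\<rho>::'v::finite mat) \<Longrightarrow> psd (kraus As \<rho>)"
  by (induction As) (auto simp: kraus_Cons kraus_Nil psd_mzero psd_madd psd_sandwich)

lemma mtrace_sandwich: "mtrace ((K::'v::finite mat) ** A ** madj K) = mtrace (madj K ** K ** A)"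
  by (metis mmult_assoc mtrace_comm)

lemma mtrace_proj_split:
  assumes G: "is_proj UNIV (G::'v::finite mat)"
  shows "mtrace (G ** \<rho> ** G) + mtrace (pcomp UNIV G ** \<rho> ** pcomp UNIV G) = mtrace \<rho>"
proof -
  have "mtrace (P ** \<rho> ** P) = mtrace (P ** \<rho>)" if "is_proj UNIV P" for P
    using mtrace_sandwich[of P \<rho>] is_projD[OF that] by (simp add: mmult_assoc mtrace_comm)
  moreover have "mtrace (G ** \<rho>) + mtrace (pcomp UNIV G ** \<rho>) = mtrace \<rho>"
    by (simp add: pcomp_def mmult_msub_left mtrace_msub)
  ultimately show ?thesis using G is_proj_pcomp[OF G] by simp
qed

section \<open>Decomposition into blocks over the complementary register\<close>

text \<open>\<open>embed_at q e\<close> is the isometry from \<open>H_q\<close> onto the basis states whose variables outside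
  \<open>q\<close> take the values \<open>e\<close>; \<open>block q e \<rho>\<close> is the corresponding diagonal block of \<open>\<rho>\<close>, an
  operator on \<open>H_q\<close>.\<close>

definition embed_at :: "'v set \<Rightarrow> 'v st \<Rightarrow> 'v mat" where
  "embed_at q e = (\<lambda>u s. if supp_in q s \<and> u = merge q s e then 1 else 0)"

definition block :: "'v::finite set \<Rightarrow> 'v st \<Rightarrow> 'v mat \<Rightarrow> 'v mat" where
  "block q e \<rho> = madj (embed_at q e) ** \<rho> ** embed_at q e"

definition outer_states :: "'v set \<Rightarrow> 'v st set" where
  "outer_states q = {e. supp_in (- q) e}"

lemma agree_merge_iff: "agree q u (merge q t e) \<longleftrightarrow> (\<forall>x. x \<notin> q \<longrightarrow> u x = e x)"
  unfolding agree_def merge_def by auto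

lemma merge_restr_iff: "u = merge q (restr q u) e \<longleftrightarrow> (\<forall>x. x \<notin> q \<longrightarrow> u x = e x)"
  unfolding merge_def restr_def by (auto simp: fun_eq_iff)

lemma embed_apply: "embed_at q e u s = (if s = restr q u \<and> u = merge q (restr q u) e then 1 else 0)"
proof -
  have "(supp_in q s \<and> u = merge q s e) \<longleftrightarrow> (s = restr q u \<and> u = merge q (restr q u) e)"
    using restr_merge supp_in_restr by metis
  then show ?thesis unfolding embed_at_def by simp
qed

lemma sum_embed_mult:
  "(\<Sum>s\<in>UNIV. embed_at q e u s * f s) = (if u = merge q (restr q u) e then f (restr q u) else 0)"
  for f :: "'v::finite st \<Rightarrow> complex"
proof -
  have "(\<Sum>s\<in>UNIV. embed_at q e u s * f s)
      = (\<Sum>s\<in>UNIV. if s = restr q u then (if u = merge q (restr q u) e then f (restr q u) else 0) else 0)"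
    by (rule sum.cong) (auto simp: embed_apply)
  then show ?thesis by simp
qed

lemma sum_mult_embed:
  "(\<Sum>v\<in>UNIV. f v * embed_at q e v t) = (if supp_in q t then f (merge q t e) else 0)"
  for f :: "'v::finite st \<Rightarrow> complex"
proof (cases "supp_in q t")
  case True
  have "(\<Sum>v\<in>UNIV. f v * embed_at q e v t) = (\<Sum>v\<in>UNIV. if v = merge q t e then f (merge q t e) else 0)"
    by (rule sum.cong) (auto simp: embed_at_def True)
  then show ?thesis using True by simp
qed (simp add: embed_at_def)

lemma ext_mmult_embed:
  assumes "on_reg q (C::'v::finite mat)" shows "ext q C ** embed_at q e = embed_at q e ** C"
proof (rule ext, rule ext)
  fix u t
  have "(ext q C ** embed_at q e) u t = (if supp_in q t then ext q C u (merge q t e) else 0)"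
    unfolding mmult_def by (rule sum_mult_embed)
  moreover have "(embed_at q e ** C) u t = (if u = merge q (restr q u) e then C (restr q u) t else 0)"
    unfolding mmult_def by (rule sum_embed_mult)
  ultimately show "(ext q C ** embed_at q e) u t = (embed_at q e ** C) u t"
    using assms unfolding ext_apply on_reg_def
    by (auto simp: restr_merge merge_restr_iff agree_merge_iff)
qed

lemma madj_embed_mmult_ext:
  assumes "on_reg q (C::'v::finite mat)" shows "madj (embed_at q e) ** ext q C = C ** madj (embed_at q e)"
  using arg_cong[OF ext_mmult_embed[OF on_reg_madj[OF assms]], of madj]
  by (simp add: madj_mmult ext_madj)

lemma block_sandwich_ext:
  assumes "on_reg q (C::'v::finite mat)"
  shows "block q e (ext q C ** \<rho> ** madj (ext q C)) = C ** block q e \<rho> ** madj C"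
proof -
  have "madj (ext q C) ** embed_at q e = embed_at q e ** madj C"
    using ext_mmult_embed[OF on_reg_madj[OF assms]] by (simp add: ext_madj)
  then show ?thesis unfolding block_def
    by (simp add: mmult_assoc) (simp add: mmult_assoc[symmetric] madj_embed_mmult_ext[OF assms])
qed

lemma block_madd: "block q e (madd X Y) = madd (block q e X) (block q e Y)"
  unfolding block_def by (simp add: mmult_madd_left mmult_madd_right)

lemma block_mzero: "block q e mzero = mzero"
  unfolding block_def by simp

lemma block_kraus_ext:
  "\<forall>A\<in>set As. on_reg q A \<Longrightarrow> block q e (kraus (map (ext q) As) \<rho>) = kraus As (block q e \<rho>)"
  by (induction As) (auto simp: kraus_Cons kraus_Nil block_madd block_mzero block_sandwich_ext)

lemma block_absorb:
  assumes "on_reg q (A::'v::finite mat)" and "ext q A ** \<rho> = \<rho>"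
  shows "A ** block q e \<rho> = block q e \<rho>"
proof -
  have "A ** block q e \<rho> = (A ** madj (embed_at q e)) ** \<rho> ** embed_at q e"
    unfolding block_def by (simp add: mmult_assoc)
  also have "\<dots> = madj (embed_at q e) ** (ext q A ** \<rho>) ** embed_at q e"
    unfolding madj_embed_mmult_ext[OF assms(1), symmetric] by (simp add: mmult_assoc)
  finally show ?thesis unfolding block_def assms(2) .
qed

lemma on_reg_block: "on_reg q (block q e \<rho>)"
proof -
  have "block q e \<rho> s t = 0" if "\<not> supp_in q s" for s t
    using that unfolding block_def mmult_def madj_def embed_at_def by simp
  moreover have "block q e \<rho> s t = 0" if "\<not> supp_in q t" for s t
    using that unfolding block_def mmult_def embed_at_def by simp
  ultimately show ?thesis unfolding on_reg_def by blast
qed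

lemma psd_block: "psd \<rho> \<Longrightarrow> psd (block q e \<rho>)"
  unfolding block_def using psd_sandwich[of \<rho> "madj (embed_at q e)"] by simp

lemma sum_embed_embed_adj:
  "(\<lambda>u v. \<Sum>e\<in>outer_states q. (embed_at q e ** madj (embed_at q e)) u v) = idW (UNIV::'v::finite set)"
proof (rule ext, rule ext)
  fix u v :: "'v st"
  have "(embed_at q e ** madj (embed_at q e)) u v
      = (if u = merge q (restr q u) e then (if v = merge q (restr q u) e then 1 else 0) else 0)" for e
    unfolding mmult_def madj_def by (subst sum_embed_mult) (simp add: embed_at_def supp_in_restr)
  then have "(\<Sum>e\<in>outer_states q. (embed_at q e ** madj (embed_at q e)) u v)
      = (\<Sum>e\<in>outer_states q. if e = restr (- q) u then (if u = v then 1 else 0) else 0)"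
    by (intro sum.cong) (auto simp: outer_states_def merge_def restr_def supp_in_def fun_eq_iff)
  also have "\<dots> = idW UNIV u v"
    using supp_in_restr[of "- q" u] by (simp add: outer_states_def idW_def)
  finally show "(\<Sum>e\<in>outer_states q. (embed_at q e ** madj (embed_at q e)) u v) = idW UNIV u v" .
qed

lemma mtrace_sum_blocks: "mtrace (\<rho>::'v::finite mat) = (\<Sum>e\<in>outer_states q. mtrace (block q e \<rho>))"
proof -
  have "mtrace (block q e \<rho>) = mtrace ((embed_at q e ** madj (embed_at q e)) ** \<rho>)" for e
    unfolding block_def by (metis mmult_assoc mtrace_comm)
  then have "(\<Sum>e\<in>outer_states q. mtrace (block q e \<rho>))
      = mtrace (\<lambda>u v. \<Sum>e\<in>outer_states q. ((embed_at q e ** madj (embed_at q e)) ** \<rho>) u v)"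
    by (simp add: mtrace_sum)
  also have "\<dots> = mtrace \<rho>" unfolding mmult_sum_left[symmetric] sum_embed_embed_adj by simp
  finally show ?thesis by simp
qed

lemma Re_mtrace_block_le:
  assumes "psd (\<rho>::'v::finite mat)" "e \<in> outer_states q"
  shows "Re (mtrace (block q e \<rho>)) \<le> Re (mtrace \<rho>)"
proof -
  have "Re (mtrace (block q e \<rho>)) \<le> (\<Sum>e\<in>outer_states q. Re (mtrace (block q e \<rho>)))"
    by (rule member_le_sum[OF assms(2)]) (use psd_mtrace psd_block assms(1) in auto)
  also have "\<dots> = Re (mtrace \<rho>)" by (subst mtrace_sum_blocks[of _ q]) (simp add: Re_sum)
  finally show ?thesis .
qed

section \<open>Denotations are positive and trace non-increasing\<close>

definition pos_tni :: "'v::finite sop \<Rightarrow> bool" where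
  "pos_tni E \<longleftrightarrow> (\<forall>\<rho>. psd \<rho> \<longrightarrow> psd (E \<rho>) \<and> Re (mtrace (E \<rho>)) \<le> Re (mtrace \<rho>))"

lemma pos_tniD:
  "pos_tni E \<Longrightarrow> psd \<rho> \<Longrightarrow> psd (E \<rho>)" "pos_tni E \<Longrightarrow> psd \<rho> \<Longrightarrow> Re (mtrace (E \<rho>)) \<le> Re (mtrace \<rho>)"
  unfolding pos_tni_def by auto

lemma pdo_UNIV_iff: "pdo UNIV \<rho> \<longleftrightarrow> psd \<rho> \<and> Re (mtrace \<rho>) \<le> 1"
  by (simp add: pdo_def)

lemma pos_tni_pdo: "pos_tni E \<Longrightarrow> pdo UNIV \<rho> \<Longrightarrow> pdo UNIV (E \<rho>)"
  unfolding pdo_UNIV_iff using pos_tniD order_trans by blast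

lemma pos_tni_sandwich_isometry:
  "madj K ** K = idW UNIV \<Longrightarrow> pos_tni (\<lambda>\<rho>. (K::'v::finite mat) ** \<rho> ** madj K)"
  unfolding pos_tni_def by (auto simp: mtrace_sandwich psd_sandwich)

lemma pos_tni_proj: assumes "is_proj UNIV (G::'v::finite mat)" shows "pos_tni (\<lambda>\<rho>. G ** \<rho> ** G)"
  unfolding pos_tni_def
proof (intro allI impI conjI)
  fix \<rho> :: "'v mat" assume r: "psd \<rho>"
  let ?N = "pcomp UNIV G"
  show "psd (G ** \<rho> ** G)" using psd_sandwich[OF r, of G] is_projD(3)[OF assms] by simp
  have "psd (?N ** \<rho> ** ?N)"
    using psd_sandwich[OF r, of ?N] is_projD(3)[OF is_proj_pcomp[OF assms]] by simp
  then have "0 \<le> Re (mtrace (?N ** \<rho> ** ?N))" using psd_mtrace by blast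
  moreover have "Re (mtrace (G ** \<rho> ** G)) + Re (mtrace (?N ** \<rho> ** ?N)) = Re (mtrace \<rho>)"
    using arg_cong[OF mtrace_proj_split[OF assms, of \<rho>], of Re] by (simp only: plus_complex.sel)
  ultimately show "Re (mtrace (G ** \<rho> ** G)) \<le> Re (mtrace \<rho>)" by linarith
qed

text \<open>The trace of \<open>\<rho>\<close> is the sum of the traces of its blocks, on each of which the extended
  Kraus map acts as the original one.\<close>

lemma pos_tni_spec:
  fixes q :: "'v::finite set" assumes "As \<in> spec_kraus q P Q" shows "pos_tni (kraus (map (ext q) As))"
  unfolding pos_tni_def
proof (intro allI impI conjI)
  fix \<rho> :: "'v mat" assume r: "psd \<rho>"
  show "psd (kraus (map (ext q) As) \<rho>)" by (rule psd_kraus[OF r])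
  have A: "\<forall>A\<in>set As. on_reg q A" "tni q (kraus As)" using assms by (auto simp: spec_kraus_def)
  have "Re (mtrace (kraus (map (ext q) As) \<rho>))
      = (\<Sum>e\<in>outer_states q. Re (mtrace (kraus As (block q e \<rho>))))"
    by (subst mtrace_sum_blocks[of _ q]) (simp add: Re_sum block_kraus_ext[OF A(1)])
  also have "\<dots> \<le> (\<Sum>e\<in>outer_states q. Re (mtrace (block q e \<rho>)))"
    by (rule sum_mono) (simp add: A(2)[unfolded tni_def, rule_format] on_reg_block psd_block[OF r])
  also have "\<dots> = Re (mtrace \<rho>)" by (subst mtrace_sum_blocks[of _ q]) (simp add: Re_sum)
  finally show "Re (mtrace (kraus (map (ext q) As) \<rho>)) \<le> Re (mtrace \<rho>)" .
qed

lemma madj_ketbra: "madj (ketbra u v) = ketbra v u"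
  unfolding madj_def ketbra_def by (auto intro!: ext)

lemma ketbra_mmult: "ketbra (i::'v::finite st) u ** ketbra u j = ketbra i j"
proof (rule ext, rule ext)
  fix s t
  have "(\<Sum>w\<in>UNIV. ketbra i u s w * ketbra u j w t) = (\<Sum>w\<in>UNIV. if w = u then ketbra i j s t else 0)"
    by (rule sum.cong) (auto simp: ketbra_def)
  then show "(ketbra i u ** ketbra u j) s t = ketbra i j s t" unfolding mmult_def by simp
qed

lemma on_reg_ketbra: "supp_in q u \<Longrightarrow> supp_in q v \<Longrightarrow> on_reg q (ketbra u v)"
  unfolding on_reg_def ketbra_def by auto

lemma supp_in_zero_st: "supp_in q zero_st"
  unfolding supp_in_def zero_st_def by simp

lemma sum_ketbra_diag: "(\<lambda>s t. \<Sum>i\<in>{i. supp_in q i}. ketbra i i s t) = idW (q::'v::finite set)"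
proof (rule ext, rule ext)
  fix s t :: "'v st"
  have "(\<Sum>i\<in>{i. supp_in q i}. ketbra i i s t)
      = (\<Sum>i\<in>{i. supp_in q i}. if i = s then (if s = t then 1 else 0) else 0)"
    by (rule sum.cong) (auto simp: ketbra_def)
  then show "(\<Sum>i\<in>{i. supp_in q i}. ketbra i i s t) = idW q s t" by (simp add: idW_def)
qed

lemma init_kraus_complete:
  "(\<lambda>s t. \<Sum>i\<in>{i. supp_in q i}. (madj (ext q (ketbra zero_st i)) ** ext q (ketbra zero_st i)) s t)
    = idW (UNIV::'v::finite set)"
proof -
  have "madj (ext q (ketbra zero_st i)) ** ext q (ketbra zero_st i) = ext q (ketbra i i)"
    if "supp_in q i" for i
    using that by (simp add: ext_madj[symmetric] ext_mmult[symmetric] on_reg_ketbra supp_in_zero_st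
        madj_ketbra ketbra_mmult)
  then have "(\<lambda>s t. \<Sum>i\<in>{i. supp_in q i}. (madj (ext q (ketbra zero_st i)) ** ext q (ketbra zero_st i)) s t)
      = (\<lambda>s t. \<Sum>i\<in>{i. supp_in q i}. ext q (ketbra i i) s t)"
    by (auto intro!: ext sum.cong)
  also have "\<dots> = ext q (idW q)" unfolding ext_sum[symmetric] sum_ketbra_diag ..
  finally show ?thesis by (simp add: ext_idW)
qed

lemma pos_tni_init:
  fixes q :: "'v::finite set"
  shows "pos_tni (\<lambda>\<rho> s t. \<Sum>i\<in>{i. supp_in q i}.
     (ext q (ketbra zero_st i) ** \<rho> ** madj (ext q (ketbra zero_st i))) s t)"
  (is "pos_tni (\<lambda>\<rho> s t. \<Sum>i\<in>?I. (?K i ** \<rho> ** madj (?K i)) s t)")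
  unfolding pos_tni_def
proof (intro allI impI conjI)
  fix \<rho> :: "'v mat" assume r: "psd \<rho>"
  show "psd (\<lambda>s t. \<Sum>i\<in>?I. (?K i ** \<rho> ** madj (?K i)) s t)"
    by (rule psd_sum) (rule psd_sandwich[OF r])
  have "mtrace (\<lambda>s t. \<Sum>i\<in>?I. (?K i ** \<rho> ** madj (?K i)) s t)
      = mtrace ((\<lambda>s t. \<Sum>i\<in>?I. (madj (?K i) ** ?K i) s t) ** \<rho>)"
    by (simp add: mtrace_sum mtrace_sandwich mmult_sum_left)
  then show "Re (mtrace (\<lambda>s t. \<Sum>i\<in>?I. (?K i ** \<rho> ** madj (?K i)) s t)) \<le> Re (mtrace \<rho>)"
    by (simp add: init_kraus_complete)
qed

lemma pos_tni_pchoice: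
  fixes E0 E1 :: "'v::finite sop"
  assumes "0 \<le> p" "p \<le> 1" "pos_tni E0" "pos_tni E1"
  shows "pos_tni (\<lambda>\<rho> s t. complex_of_real p * E0 \<rho> s t + complex_of_real (1 - p) * E1 \<rho> s t)"
  unfolding pos_tni_def
proof (intro allI impI conjI)
  fix \<rho> :: "'v mat" assume r: "psd \<rho>"
  let ?E = "\<lambda>s t. complex_of_real p * E0 \<rho> s t + complex_of_real (1 - p) * E1 \<rho> s t"
  have e: "?E = madd (\<lambda>s t. complex_of_real p * E0 \<rho> s t) (\<lambda>s t. complex_of_real (1 - p) * E1 \<rho> s t)"
    unfolding madd_def ..
  have t: "psd (E0 \<rho>)" "psd (E1 \<rho>)" "Re (mtrace (E0 \<rho>)) \<le> Re (mtrace \<rho>)"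
    "Re (mtrace (E1 \<rho>)) \<le> Re (mtrace \<rho>)"
    using pos_tniD assms(3,4) r by blast+
  show "psd ?E" unfolding e using assms(1,2) t(1,2) by (intro psd_madd psd_scale) auto
  have "Re (mtrace ?E) = p * Re (mtrace (E0 \<rho>)) + (1 - p) * Re (mtrace (E1 \<rho>))"
    unfolding e mtrace_madd mtrace_scale by simp
  also have "\<dots> \<le> p * Re (mtrace \<rho>) + (1 - p) * Re (mtrace \<rho>)"
    using assms(1,2) t(3,4) by (intro add_mono mult_left_mono) auto
  finally show "Re (mtrace ?E) \<le> Re (mtrace \<rho>)" by (simp add: algebra_simps)
qed

lemma pos_tni_if:
  assumes G: "is_proj UNIV (G::'v::finite mat)" and "pos_tni E1" "pos_tni E0"
  shows "pos_tni (\<lambda>\<rho>. madd (E1 (G ** \<rho> ** G)) (E0 (pcomp UNIV G ** \<rho> ** pcomp UNIV G)))"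
  unfolding pos_tni_def
proof (intro allI impI conjI)
  fix \<rho> :: "'v mat" assume r: "psd \<rho>"
  let ?N = "pcomp UNIV G"
  have a: "psd (G ** \<rho> ** G)" "psd (?N ** \<rho> ** ?N)"
    using pos_tni_proj[OF G] pos_tni_proj[OF is_proj_pcomp[OF G]] r by (auto simp: pos_tni_def)
  show "psd (madd (E1 (G ** \<rho> ** G)) (E0 (?N ** \<rho> ** ?N)))"
    by (rule psd_madd[OF pos_tniD(1)[OF assms(2) a(1)] pos_tniD(1)[OF assms(3) a(2)]])
  have "Re (mtrace (madd (E1 (G ** \<rho> ** G)) (E0 (?N ** \<rho> ** ?N))))
      \<le> Re (mtrace (G ** \<rho> ** G)) + Re (mtrace (?N ** \<rho> ** ?N))"
    unfolding mtrace_madd plus_complex.sel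
    by (rule add_mono[OF pos_tniD(2)[OF assms(2) a(1)] pos_tniD(2)[OF assms(3) a(2)]])
  also have "\<dots> = Re (mtrace \<rho>)"
    using arg_cong[OF mtrace_proj_split[OF G, of \<rho>], of Re] by (simp only: plus_complex.sel)
  finally show "Re (mtrace (madd (E1 (G ** \<rho> ** G)) (E0 (?N ** \<rho> ** ?N)))) \<le> Re (mtrace \<rho>)" .
qed

lemma kraus_mzero: "kraus As mzero = mzero"
  by (induction As) (simp_all add: kraus_Cons kraus_Nil, simp add: madd_def mzero_def)

lemma loop_iter_mzero: "(\<And>k. Fs k mzero = mzero) \<Longrightarrow> loop_iter P Fs k mzero = mzero"
  by (induction k) auto

lemma den_mzero: "E \<in> den S \<Longrightarrow> E mzero = (mzero::'v::finite mat)"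
proof (induction S arbitrary: E)
  case (While P q S)
  then obtain Fs where "E = (\<lambda>\<rho>. (\<lambda>s t. \<Sum>k. (ext q (pcomp q P) ** loop_iter (ext q P) Fs k \<rho>
        ** ext q (pcomp q P)) s t))" and "\<forall>k. Fs k \<in> den S" by auto
  moreover from this have "loop_iter (ext q P) Fs k mzero = mzero" for k
    by (intro loop_iter_mzero) (use While.IH in blast)
  ultimately show ?case by simp (simp add: mzero_def)
next
  case (Init q) then show ?case by simp (simp add: mzero_def)
next
  case (PChoice S0 p S1) then show ?case by auto (simp add: mzero_def)
next
  case (If P q S1 S0) then show ?case by auto (simp add: mzero_def madd_def)
qed (auto simp: kraus_mzero)

lemma mmult_suminf:
  assumes "\<And>s t. summable (\<lambda>k. (M k::'v::finite mat) s t)"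
  shows "X ** (\<lambda>s t. \<Sum>k. M k s t) = (\<lambda>s t. \<Sum>k. (X ** M k) s t)"
proof (rule ext, rule ext)
  fix s t
  have "(X ** (\<lambda>s t. \<Sum>k. M k s t)) s t = (\<Sum>u\<in>UNIV. \<Sum>k. X s u * M k u t)"
    unfolding mmult_def using assms by (simp add: suminf_mult)
  also have "\<dots> = (\<Sum>k. \<Sum>u\<in>UNIV. X s u * M k u t)"
    by (rule suminf_sum[symmetric]) (use assms summable_mult in blast)
  finally show "(X ** (\<lambda>s t. \<Sum>k. M k s t)) s t = (\<Sum>k. (X ** M k) s t)" by (simp add: mmult_def)
qed

lemma qf_suminf:
  assumes "\<And>s t. summable (\<lambda>k. (M k::'v::finite mat) s t)"
  shows "summable (\<lambda>k. qf (M k) x) \<and> qf (\<lambda>s t. \<Sum>k. M k s t) x = (\<Sum>k. qf (M k) x)"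
proof -
  have sm: "\<And>s t. summable (\<lambda>k. cnj (x s) * M k s t * x t)"
    using summable_mult2[OF summable_mult[OF assms]] by (simp add: mult.assoc)
  have sm2: "\<And>s. summable (\<lambda>k. \<Sum>t\<in>UNIV. cnj (x s) * M k s t * x t)"
    by (rule summable_sum) (use sm in blast)
  have tw: "\<And>s t. cnj (x s) * (\<Sum>k. M k s t) * x t = (\<Sum>k. cnj (x s) * M k s t * x t)"
    using suminf_mult2[OF summable_mult[OF assms]] suminf_mult[OF assms] by simp
  have "qf (\<lambda>s t. \<Sum>k. M k s t) x = (\<Sum>s\<in>UNIV. \<Sum>t\<in>UNIV. \<Sum>k. cnj (x s) * M k s t * x t)"
    unfolding qf_def tw ..
  also have "\<dots> = (\<Sum>s\<in>UNIV. \<Sum>k. \<Sum>t\<in>UNIV. cnj (x s) * M k s t * x t)"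
    by (rule sum.cong[OF HOL.refl], rule suminf_sum[symmetric]) (use sm in blast)
  also have "\<dots> = (\<Sum>k. \<Sum>s\<in>UNIV. \<Sum>t\<in>UNIV. cnj (x s) * M k s t * x t)"
    by (rule suminf_sum[symmetric]) (use sm2 in blast)
  finally show ?thesis unfolding qf_def using summable_sum[of UNIV, OF sm2] by simp
qed

lemma mtrace_suminf:
  assumes "\<And>s t. summable (\<lambda>k. (M k::'v::finite mat) s t)"
  shows "summable (\<lambda>k. mtrace (M k)) \<and> mtrace (\<lambda>s t. \<Sum>k. M k s t) = (\<Sum>k. mtrace (M k))"
  unfolding mtrace_def using suminf_sum[of UNIV "\<lambda>s k. M k s s"] summable_sum[of UNIV "\<lambda>s k. M k s s"] assms
  by auto

lemma psd_suminf:
  assumes "\<And>s t. summable (\<lambda>k. (M k::'v::finite mat) s t)" "\<And>k. psd (M k)"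
  shows "psd (\<lambda>s t. \<Sum>k. M k s t)"
  unfolding psd_def
proof
  fix x
  note q = qf_suminf[where M=M and x=x, OF assms(1)]
  have "Im (qf (\<lambda>s t. \<Sum>k. M k s t) x) = (\<Sum>k. Im (qf (M k) x))"
    using q Im_suminf by auto
  also have "\<dots> = 0" using assms(2) unfolding psd_def by simp
  finally have a: "Im (qf (\<lambda>s t. \<Sum>k. M k s t) x) = 0" .
  have "Re (qf (\<lambda>s t. \<Sum>k. M k s t) x) = (\<Sum>k. Re (qf (M k) x))"
    using q Re_suminf by auto
  also have "0 \<le> \<dots>" by (rule suminf_nonneg) (use q summable_Re assms(2) in \<open>auto simp: psd_def\<close>)
  finally show "Im (qf (\<lambda>s t. \<Sum>k. M k s t) x) = 0 \<and> 0 \<le> Re (qf (\<lambda>s t. \<Sum>k. M k s t) x)"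
    using a by simp
qed

lemma loop_iter_psd:
  assumes G: "is_proj UNIV (G::'v::finite mat)" and Fs: "\<forall>k. pos_tni (Fs k)" and r: "psd \<rho>"
  shows "psd (loop_iter G Fs k \<rho>)"
proof (induction k)
  case (Suc k)
  then have "psd (G ** loop_iter G Fs k \<rho> ** G)"
    using psd_sandwich[OF Suc, of G] is_projD(3)[OF G] by simp
  then show ?case using pos_tniD(1)[OF Fs[rule_format]] by simp
qed (simp add: r)

text \<open>In the loop, the trace of the current iterate bounds the traces of all later exits, so
  the exit series converges entrywise.\<close>

lemma loop_exit_trace_le:
  assumes G: "is_proj UNIV (G::'v::finite mat)" and Fs: "\<forall>k. pos_tni (Fs k)" and r: "psd \<rho>"
  shows "(\<Sum>k<n. Re (mtrace (pcomp UNIV G ** loop_iter G Fs k \<rho> ** pcomp UNIV G)))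
      + Re (mtrace (loop_iter G Fs n \<rho>)) \<le> Re (mtrace \<rho>)"
proof (induction n)
  case (Suc n)
  let ?it = "loop_iter G Fs n \<rho>"
  have "psd (G ** ?it ** G)"
    using psd_sandwich[OF loop_iter_psd[OF G Fs r], of G] is_projD(3)[OF G] by simp
  then have "Re (mtrace (loop_iter G Fs (Suc n) \<rho>)) \<le> Re (mtrace (G ** ?it ** G))"
    unfolding loop_iter.simps by (rule pos_tniD(2)[OF Fs[rule_format]])
  moreover have "Re (mtrace (G ** ?it ** G)) + Re (mtrace (pcomp UNIV G ** ?it ** pcomp UNIV G))
      = Re (mtrace ?it)"
    using arg_cong[OF mtrace_proj_split[OF G, of ?it], of Re] by (simp only: plus_complex.sel)
  ultimately show ?case using Suc.IH unfolding sum.lessThan_Suc by linarith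
qed simp

lemma psd_loop_exit:
  assumes G: "is_proj UNIV (G::'v::finite mat)" and Fs: "\<forall>k. pos_tni (Fs k)" and r: "psd \<rho>"
  shows "psd (pcomp UNIV G ** loop_iter G Fs k \<rho> ** pcomp UNIV G)"
  using psd_sandwich[OF loop_iter_psd[OF G Fs r], of "pcomp UNIV G"]
    is_projD(3)[OF is_proj_pcomp[OF G]] by simp

lemma Re_mtrace_loop_iter_le:
  assumes G: "is_proj UNIV (G::'v::finite mat)" and Fs: "\<forall>k. pos_tni (Fs k)" and r: "psd \<rho>"
  shows "Re (mtrace (loop_iter G Fs k \<rho>)) \<le> Re (mtrace \<rho>)"
proof -
  have "0 \<le> (\<Sum>j<k. Re (mtrace (pcomp UNIV G ** loop_iter G Fs j \<rho> ** pcomp UNIV G)))"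
    using psd_mtrace[OF psd_loop_exit[OF G Fs r]] by (simp add: sum_nonneg)
  then show ?thesis using loop_exit_trace_le[OF G Fs r, of k] by linarith
qed

lemma loop_exit_summable:
  assumes G: "is_proj UNIV (G::'v::finite mat)" and Fs: "\<forall>k. pos_tni (Fs k)" and r: "psd \<rho>"
  defines "c \<equiv> \<lambda>k. Re (mtrace (pcomp UNIV G ** loop_iter G Fs k \<rho> ** pcomp UNIV G))"
  shows "summable c" and "(\<Sum>k. c k) \<le> Re (mtrace \<rho>)"
    and "summable (\<lambda>k. (pcomp UNIV G ** loop_iter G Fs k \<rho> ** pcomp UNIV G) s t)"
proof -
  note psd_exit = psd_loop_exit[OF G Fs r]
  have c0: "0 \<le> c k" for k unfolding c_def using psd_mtrace[OF psd_exit] by blast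
  have bound: "(\<Sum>k<n. c k) \<le> Re (mtrace \<rho>)" for n
    using loop_exit_trace_le[OF G Fs r, of n] psd_mtrace[OF loop_iter_psd[OF G Fs r, of n]]
    unfolding c_def by linarith
  show sc: "summable c" by (rule summableI_nonneg_bounded[OF c0 bound])
  show "(\<Sum>k. c k) \<le> Re (mtrace \<rho>)" by (rule suminf_le_const[OF sc bound])
  have "norm ((pcomp UNIV G ** loop_iter G Fs k \<rho> ** pcomp UNIV G) s t) \<le> c k" for k
    unfolding c_def by (rule psd_entry_le_mtrace[OF psd_exit])
  then show "summable (\<lambda>k. (pcomp UNIV G ** loop_iter G Fs k \<rho> ** pcomp UNIV G) s t)"
    by (intro summable_comparison_test[OF _ sc] exI[of _ 0] allI impI)
qed

lemma pos_tni_while: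
  assumes G: "is_proj UNIV (G::'v::finite mat)" and Fs: "\<forall>k. pos_tni (Fs k)"
  shows "pos_tni (\<lambda>\<rho> s t. \<Sum>k. (pcomp UNIV G ** loop_iter G Fs k \<rho> ** pcomp UNIV G) s t)"
  unfolding pos_tni_def
proof (intro allI impI conjI)
  fix \<rho> :: "'v mat" assume r: "psd \<rho>"
  let ?M = "\<lambda>k. pcomp UNIV G ** loop_iter G Fs k \<rho> ** pcomp UNIV G"
  note sm = loop_exit_summable[OF G Fs r]
  show "psd (\<lambda>s t. \<Sum>k. ?M k s t)" by (rule psd_suminf[OF sm(3) psd_loop_exit[OF G Fs r]])
  have "Re (mtrace (\<lambda>s t. \<Sum>k. ?M k s t)) = (\<Sum>k. Re (mtrace (?M k)))"
    using mtrace_suminf[of ?M, OF sm(3)] Re_suminf by auto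
  then show "Re (mtrace (\<lambda>s t. \<Sum>k. ?M k s t)) \<le> Re (mtrace \<rho>)" using sm(2) by simp
qed

lemma pos_tni_den: "wf S \<Longrightarrow> E \<in> den S \<Longrightarrow> pos_tni (E::'v::finite sop)"
proof (induction S arbitrary: E)
  case Skip then show ?case by (simp add: pos_tni_def)
next
  case Abort then show ?case using psd_mtrace by (auto simp: pos_tni_def psd_mzero)
next
  case (Init q) then show ?case using pos_tni_init by simp
next
  case (Apply q U)
  then have U: "on_reg q U" "madj U ** U = idW q" by (auto simp: is_unitary_def)
  have "madj (ext q U) ** ext q U = idW UNIV"
    by (simp add: ext_madj[symmetric] ext_mmult[symmetric] on_reg_madj[OF U(1)] U(2) ext_idW)
  then show ?case using Apply pos_tni_sandwich_isometry by auto
next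
  case (Assert P q) then show ?case using pos_tni_proj[OF is_proj_ext] by auto
next
  case (Spec P Q q) then show ?case using pos_tni_spec by auto
next
  case (PChoice S0 p S1)
  then obtain E0 E1 where E: "E = (\<lambda>\<rho> s t. complex_of_real p * E0 \<rho> s t
      + complex_of_real (1 - p) * E1 \<rho> s t)" and "pos_tni E0" "pos_tni E1"
    by auto
  then show ?case unfolding E using PChoice.prems(1) by (intro pos_tni_pchoice) auto
next
  case (Seq S0 S1)
  then obtain E0 E1 where "E = E1 \<circ> E0" "pos_tni E0" "pos_tni E1" by auto
  then show ?case unfolding pos_tni_def by (auto intro: order_trans)
next
  case (If P q S1 S0)
  then obtain E1 E0 where E: "E = (\<lambda>\<rho>. madd (E1 (ext q P ** \<rho> ** ext q P))
      (E0 (ext q (pcomp q P) ** \<rho> ** ext q (pcomp q P))))" and "pos_tni E1" "pos_tni E0"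
    by auto
  then show ?case unfolding E ext_pcomp using If.prems(1) by (intro pos_tni_if is_proj_ext) auto
next
  case (While P q S)
  then obtain Fs where E: "E = (\<lambda>\<rho> s t. \<Sum>k. (ext q (pcomp q P) ** loop_iter (ext q P) Fs k \<rho>
      ** ext q (pcomp q P)) s t)" and "\<forall>k. pos_tni (Fs k)"
    by auto
  then show ?case unfolding E ext_pcomp using While.prems(1) by (intro pos_tni_while is_proj_ext) auto
qed

lemma psd_eq_mzero_if_blocks_zero:
  assumes "psd (Z::'v::finite mat)" "\<And>e. e \<in> outer_states q \<Longrightarrow> block q e Z = mzero"
  shows "Z = mzero"
proof -
  have "Re (mtrace Z) = 0" by (subst mtrace_sum_blocks[of _ q]) (simp add: assms(2))
  then show ?thesis by (rule psd_mtrace_zero_imp[OF assms(1)])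
qed

lemma psd_proj_sandwich_eq_mzero:
  assumes X: "psd (X::'v::finite mat)" and N: "is_proj UNIV N" and Z: "N ** X ** N = mzero"
  shows "N ** X = mzero"
proof -
  have "qf X (mv N (ket t)) = 0" for t
    using qf_sandwich[of N X "ket t"] Z is_projD(3)[OF N] by (simp add: qf_def mzero_def)
  then have "mv X (mv N (ket t)) = (\<lambda>s. 0)" for t by (rule psd_qf_zero_imp_mv_zero[OF X])
  then have "X ** N = mzero" by (intro mat_eqI_mv_ket) (simp only: mv_mmult, simp add: mv_def mzero_def)
  then have "madj (X ** N) = mzero" by simp
  then show ?thesis unfolding madj_mmult psd_madj[OF X] is_projD(3)[OF N] .
qed

lemma on_reg_kraus: "\<forall>A\<in>set As. on_reg q A \<Longrightarrow> on_reg q X \<Longrightarrow> on_reg q (kraus As (X::'v::finite mat))"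
  by (induction As) (auto simp: kraus_Cons kraus_Nil on_reg_madd on_reg_mmult on_reg_madj)

text \<open>Each block of the input is a partial density operator on \<open>q\<close> satisfying \<open>X\<close>, so the
  specification maps it into \<open>Y \<subseteq> B\<close>; hence every block of the part of the output outside
  \<open>B\<close> vanishes.\<close>

lemma spec_kraus_sound:
  assumes As: "As \<in> spec_kraus q X Y" and A: "is_proj q A" and B: "is_proj q B"
    and AX: "ran A \<subseteq> ran X" and YB: "ran Y \<subseteq> ran B"
    and r: "pdo UNIV (\<rho>::'v::finite mat)" "ext q A ** \<rho> = \<rho>"
  shows "ext q B ** kraus (map (ext q) As) \<rho> = kraus (map (ext q) As) \<rho>"
proof -
  have As_reg: "\<forall>A\<in>set As. on_reg q A"
    and As_spec: "\<And>\<sigma>. pdo q \<sigma> \<Longrightarrow> models \<sigma> X \<Longrightarrow> models (kraus As \<sigma>) Y"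
    using As by (auto simp: spec_kraus_def)
  have r': "psd \<rho>" "Re (mtrace \<rho>) \<le> 1" using r(1) by (auto simp: pdo_UNIV_iff)
  define Out where "Out = kraus (map (ext q) As) \<rho>"
  have Out: "psd Out" unfolding Out_def by (rule psd_kraus[OF r'(1)])
  let ?C = "pcomp q B"
  have C: "is_proj q ?C" by (rule is_proj_pcomp[OF B])
  have "block q e (ext q ?C ** Out ** madj (ext q ?C)) = mzero" if e: "e \<in> outer_states q" for e
  proof -
    have "pdo q (block q e \<rho>)"
      unfolding pdo_def using on_reg_block psd_block[OF r'(1)] Re_mtrace_block_le[OF r'(1) e] r'(2)
      by auto
    moreover have "models (block q e \<rho>) X"
      using ran_mmult_subset[of A "block q e \<rho>"] AX
      unfolding models_def block_absorb[OF is_projD(1)[OF A] r(2)] by blast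
    ultimately have "models (kraus As (block q e \<rho>)) Y" by (rule As_spec)
    then have "ran (kraus As (block q e \<rho>)) \<subseteq> ran B" using YB unfolding models_def by blast
    then have "B ** kraus As (block q e \<rho>) = kraus As (block q e \<rho>)"
      using ran_subset_idem_iff is_projD(2)[OF B] by blast
    then have "?C ** kraus As (block q e \<rho>) = mzero"
      unfolding pcomp_def mmult_msub_left idW_mmult[OF on_reg_kraus[OF As_reg on_reg_block]]
      by (simp add: msub_def mzero_def)
    then show ?thesis
      unfolding block_sandwich_ext[OF is_projD(1)[OF C]] Out_def block_kraus_ext[OF As_reg] by simp
  qed
  then have "ext q ?C ** Out ** madj (ext q ?C) = mzero"
    by (rule psd_eq_mzero_if_blocks_zero[OF psd_sandwich[OF Out]])
  then have "ext q ?C ** Out = mzero"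
    using psd_proj_sandwich_eq_mzero[OF Out is_proj_ext[OF C]] is_projD(3)[OF C]
    by (simp add: ext_madj[symmetric])
  then have "pcomp UNIV (ext q B) ** Out = mzero" by (simp only: ext_pcomp)
  then have "msub Out (ext q B ** Out) = mzero" unfolding pcomp_def mmult_msub_left by simp
  then show ?thesis unfolding Out_def[symmetric] by (auto simp: msub_def mzero_def fun_eq_iff)
qed

lemma hoare_top: "hoare A S (idW (UNIV::'v::finite set))"
  unfolding hoare_def models_def by (simp add: ran_subset_idem_iff)

lemma models_mzero: "models mzero (B::'v::finite mat)"
  unfolding models_def ran_mzero using zero_in_ran by blast

lemma hoare_bot: "hoare mzero S (B::'v::finite mat)"
  unfolding hoare_def
proof (intro allI impI)
  fix \<rho> :: "'v mat" and E assume "pdo UNIV \<rho> \<and> E \<in> den S \<and> models \<rho> mzero"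
  then have "\<rho> = mzero" "E \<in> den S" using proj_eq_mzeroI unfolding models_def by blast+
  then show "models (E \<rho>) B" using den_mzero models_mzero by metis
qed

lemma hoare_abort: "hoare A Abort (B::'v::finite mat)"
  unfolding hoare_def by (simp add: models_mzero)

lemma hoare_spec:
  fixes q :: "'v::finite set"
  assumes "is_proj q A" "is_proj q B" "ran A \<subseteq> ran X" "ran Y \<subseteq> ran B"
  shows "hoare (ext q A) (Spec X Y q) (ext q B)"
  unfolding hoare_def
proof (intro allI impI)
  fix \<rho> :: "'v mat" and E assume h: "pdo UNIV \<rho> \<and> E \<in> den (Spec X Y q) \<and> models \<rho> (ext q A)"
  then obtain As where E: "E = kraus (map (ext q) As)" and As: "As \<in> spec_kraus q X Y" by auto
  have "ext q B ** E \<rho> = E \<rho>"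
    unfolding E using h models_ext_iff[OF assms(1)] by (intro spec_kraus_sound[OF As assms]) auto
  then show "models (E \<rho>) (ext q B)" using models_ext_iff[OF assms(2)] by simp
qed

lemma hoare_seq:
  fixes A :: "'v::finite mat"
  assumes "wf S0" "hoare A S0 R" "hoare R S1 B" shows "hoare A (Seq S0 S1) B"
  unfolding hoare_def
proof (intro allI impI)
  fix \<rho> :: "'v mat" and E assume h: "pdo UNIV \<rho> \<and> E \<in> den (Seq S0 S1) \<and> models \<rho> A"
  then obtain E0 E1 where E: "E = E1 \<circ> E0" and e: "E0 \<in> den S0" "E1 \<in> den S1" by auto
  have "models (E0 \<rho>) R" "pdo UNIV (E0 \<rho>)"
    using assms(2) h e pos_tni_pdo[OF pos_tni_den[OF assms(1) e(1)]] unfolding hoare_def by blast+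
  then show "models (E \<rho>) B" using assms(3) e unfolding hoare_def E by auto
qed

lemma hoare_pchoice:
  fixes B :: "'v::finite mat"
  assumes "B ** B = B" "hoare A S0 B" "hoare A S1 B" shows "hoare A (PChoice S0 p S1) B"
  unfolding hoare_def
proof (intro allI impI)
  fix \<rho> :: "'v mat" and E assume h: "pdo UNIV \<rho> \<and> E \<in> den (PChoice S0 p S1) \<and> models \<rho> A"
  then obtain E0 E1 where E: "E = (\<lambda>\<rho> s t. complex_of_real p * E0 \<rho> s t
      + complex_of_real (1 - p) * E1 \<rho> s t)" and e: "E0 \<in> den S0" "E1 \<in> den S1"
    by auto
  have "models (E0 \<rho>) B" "models (E1 \<rho>) B"
    using assms(2,3) h e unfolding hoare_def by blast+
  then have "B ** E0 \<rho> = E0 \<rho>" "B ** E1 \<rho> = E1 \<rho>"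
    using ran_subset_idem_iff[OF assms(1)] unfolding models_def by blast+
  then have "B ** E \<rho> = E \<rho>" unfolding E mmult_linear_right by simp
  then show "models (E \<rho>) B" using ran_subset_idem_iff[OF assms(1)] unfolding models_def by blast
qed

lemma ext_absorb_sandwich:
  assumes A: "is_proj q A" and B: "is_proj q B" and K: "on_reg q K"
    and KA: "ran (K ** A) \<subseteq> ran B" and r: "ext q A ** \<rho> = \<rho>"
  shows "ext q B ** (ext q K ** \<rho> ** M) = ext q K ** \<rho> ** (M::'v::finite mat)"
proof -
  have "ext q B ** ext q (K ** A) = ext q (K ** A)"
    by (rule ext_mmult_absorb[OF on_reg_mmult[OF K is_projD(1)[OF A]] B KA])
  then have "ext q B ** ext q K ** ext q A = ext q K ** ext q A"
    using K by (simp add: ext_mmult mmult_assoc)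
  then show ?thesis using r by (metis mmult_assoc)
qed

lemma hoare_skip:
  assumes "is_proj q A" "is_proj q B" "ran A \<subseteq> ran B"
  shows "hoare (ext q A) Skip (ext q B)"
  using ext_absorb_sandwich[OF assms(1,2) is_projD(1)[OF is_proj_idW], of \<rho> "idW UNIV" for \<rho>]
    idW_mmult[OF is_projD(1)[OF assms(1)]] assms(3) models_ext_iff[OF assms(1)]
    models_ext_iff[OF assms(2)]
  unfolding hoare_def by (auto simp: ext_idW)

lemma hoare_apply:
  assumes "is_proj q A" "is_proj q B" "on_reg q U" "ran (U ** A) \<subseteq> ran B"
  shows "hoare (ext q A) (Apply q U) (ext q B)"
  unfolding hoare_def using ext_absorb_sandwich[OF assms] models_ext_iff[OF assms(1)]
    models_ext_iff[OF assms(2)] by auto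

lemma hoare_assert:
  assumes "is_proj q A" "is_proj q B" "is_proj q P" "ran (P ** A) \<subseteq> ran B"
  shows "hoare (ext q A) (Assert P q) (ext q B)"
  unfolding hoare_def using ext_absorb_sandwich[OF assms(1,2) is_projD(1)[OF assms(3)] assms(4)]
    models_ext_iff[OF assms(1)] models_ext_iff[OF assms(2)] by auto

lemma proj_mmult_ketbra_zero:
  assumes "is_proj q (B::'v::finite mat)" "ket zero_st \<in> ran B"
  shows "B ** ketbra zero_st i = ketbra zero_st i"
proof -
  have "mv B (ket zero_st) = ket zero_st" using assms mem_ran_idem_iff is_projD(2) by blast
  then have c: "B s zero_st = ket zero_st s" for s by (metis mv_ket)
  have "(\<Sum>u\<in>UNIV. B s u * ketbra zero_st i u t)
      = (\<Sum>u\<in>UNIV. if u = (zero_st::'v st) then B s zero_st * ketbra zero_st i zero_st t else 0)" for s t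
    by (rule sum.cong) (auto simp: ketbra_def)
  then show ?thesis by (auto intro!: ext simp: mmult_def c ket_def ketbra_def)
qed

lemma hoare_init:
  assumes B: "is_proj q (B::'v::finite mat)" and "ket zero_st \<in> ran B"
  shows "hoare A (Init q) (ext q B)"
  unfolding hoare_def
proof (intro allI impI)
  fix \<rho> :: "'v mat" and E assume "pdo UNIV \<rho> \<and> E \<in> den (Init q) \<and> models \<rho> A"
  then have E: "E = (\<lambda>\<rho> s t. \<Sum>i\<in>{i. supp_in q i}.
      (ext q (ketbra zero_st i) ** \<rho> ** madj (ext q (ketbra zero_st i))) s t)" by simp
  have "ext q B ** ext q (ketbra zero_st i) = ext q (ketbra zero_st i)" for i
    using proj_mmult_ketbra_zero[OF assms] is_projD(1)[OF B] by (simp add: ext_mmult[symmetric])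
  then have "ext q B ** E \<rho> = E \<rho>" unfolding E mmult_sum_right by (simp add: mmult_assoc[symmetric])
  then show "models (E \<rho>) (ext q B)" using models_ext_iff[OF B] by simp
qed

lemma hoare_if:
  fixes q :: "'v::finite set"
  assumes A: "is_proj q A" and B: "is_proj q B" and G: "is_proj q G"
    and A1: "is_proj q A1" "ran (G ** A) \<subseteq> ran A1" "hoare (ext q A1) S1 (ext q B)"
    and A0: "is_proj q A0" "ran (pcomp q G ** A) \<subseteq> ran A0" "hoare (ext q A0) S0 (ext q B)"
  shows "hoare (ext q A) (If G q S1 S0) (ext q B)"
  unfolding hoare_def
proof (intro allI impI)
  fix \<rho> :: "'v mat" and E assume h: "pdo UNIV \<rho> \<and> E \<in> den (If G q S1 S0) \<and> models \<rho> (ext q A)"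
  then obtain E1 E0 where E: "E = (\<lambda>\<rho>. madd (E1 (ext q G ** \<rho> ** ext q G))
      (E0 (ext q (pcomp q G) ** \<rho> ** ext q (pcomp q G))))" and e: "E1 \<in> den S1" "E0 \<in> den S0"
    by auto
  have rA: "ext q A ** \<rho> = \<rho>" using h models_ext_iff[OF A] by simp
  have branch: "pdo UNIV (ext q H ** \<rho> ** ext q H) \<and> models (ext q H ** \<rho> ** ext q H) (ext q A')"
    if H: "is_proj q H" and A': "is_proj q A'" "ran (H ** A) \<subseteq> ran A'" for H A'
    using pos_tni_pdo[OF pos_tni_proj[OF is_proj_ext[OF H]]] h
      ext_absorb_sandwich[OF A A'(1) is_projD(1)[OF H] A'(2) rA] models_ext_iff[OF A'(1)]
    by blast
  have "models (E1 (ext q G ** \<rho> ** ext q G)) (ext q B)"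
    using A1(3) branch[OF G A1(1,2)] e(1) unfolding hoare_def by blast
  moreover have "models (E0 (ext q (pcomp q G) ** \<rho> ** ext q (pcomp q G))) (ext q B)"
    using A0(3) branch[OF is_proj_pcomp[OF G] A0(1,2)] e(2) unfolding hoare_def by blast
  ultimately have "ext q B ** E \<rho> = E \<rho>"
    using models_ext_iff[OF B] unfolding E by (simp add: mmult_madd_right)
  then show "models (E \<rho>) (ext q B)" using models_ext_iff[OF B] by simp
qed

lemma loop_iter_invariant:
  fixes q :: "'v::finite set"
  assumes S: "wf S" and Fs: "\<forall>k. Fs k \<in> den S" and G: "is_proj q G"
    and I: "is_proj q I" and A1: "is_proj q A1" "ran (G ** I) \<subseteq> ran A1" "hoare (ext q A1) S (ext q I)"
    and r: "pdo UNIV \<rho>" "ext q I ** \<rho> = \<rho>"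
  shows "ext q I ** loop_iter (ext q G) Fs k \<rho> = loop_iter (ext q G) Fs k \<rho>"
proof (induction k)
  case (Suc k)
  let ?it = "loop_iter (ext q G) Fs k \<rho>"
  have GU: "is_proj UNIV (ext q G)" by (rule is_proj_ext[OF G])
  have t: "\<forall>k. pos_tni (Fs k)" using pos_tni_den[OF S] Fs by blast
  have r': "psd \<rho>" "Re (mtrace \<rho>) \<le> 1" using r(1) by (auto simp: pdo_UNIV_iff)
  have "pdo UNIV ?it"
    using loop_iter_psd[OF GU t r'(1), of k] order_trans[OF Re_mtrace_loop_iter_le[OF GU t r'(1)] r'(2)]
    unfolding pdo_UNIV_iff by blast
  then have "pdo UNIV (ext q G ** ?it ** ext q G)" by (rule pos_tni_pdo[OF pos_tni_proj[OF GU]])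
  moreover have "models (ext q G ** ?it ** ext q G) (ext q A1)"
    using ext_absorb_sandwich[OF I A1(1) is_projD(1)[OF G] A1(2) Suc] models_ext_iff[OF A1(1)]
    by simp
  ultimately have "models (Fs k (ext q G ** ?it ** ext q G)) (ext q I)"
    using A1(3) Fs unfolding hoare_def by blast
  then show ?case using models_ext_iff[OF I] by simp
qed (simp add: r(2))

lemma hoare_while:
  fixes q :: "'v::finite set"
  assumes S: "wf S" and A: "is_proj q A" and B: "is_proj q B" and G: "is_proj q G"
    and I: "is_proj q I" "ran A \<subseteq> ran I" "ran (pcomp q G ** I) \<subseteq> ran B"
    and A1: "is_proj q A1" "ran (G ** I) \<subseteq> ran A1" "hoare (ext q A1) S (ext q I)"
  shows "hoare (ext q A) (While G q S) (ext q B)"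
  unfolding hoare_def
proof (intro allI impI)
  fix \<rho> :: "'v mat" and E assume h: "pdo UNIV \<rho> \<and> E \<in> den (While G q S) \<and> models \<rho> (ext q A)"
  then obtain Fs where E: "E = (\<lambda>\<rho> s t. \<Sum>k. (ext q (pcomp q G) ** loop_iter (ext q G) Fs k \<rho>
      ** ext q (pcomp q G)) s t)" and Fs: "\<forall>k. Fs k \<in> den S"
    by auto
  have "ext q I ** ext q A = ext q A" by (rule ext_mmult_absorb[OF is_projD(1)[OF A] I(1,2)])
  then have "ext q I ** \<rho> = \<rho>" using h models_ext_iff[OF A] by (metis mmult_assoc)
  note inv = loop_iter_invariant[OF S Fs G I(1) A1 conjunct1[OF h] this]
  let ?exit = "\<lambda>k. ext q (pcomp q G) ** loop_iter (ext q G) Fs k \<rho> ** ext q (pcomp q G)"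
  have "ext q B ** ?exit k = ?exit k" for k
    by (rule ext_absorb_sandwich[OF I(1) B is_projD(1)[OF is_proj_pcomp[OF G]] I(3) inv])
  moreover have "psd \<rho>" using h by (simp add: pdo_UNIV_iff)
  then have "summable (\<lambda>k. ?exit k s t)" for s t
    using loop_exit_summable(3)[OF is_proj_ext[OF G] _ \<open>psd \<rho>\<close>] pos_tni_den[OF S] Fs
    unfolding ext_pcomp by blast
  ultimately have "ext q B ** E \<rho> = E \<rho>" unfolding E by (simp add: mmult_suminf)
  then show "models (E \<rho>) (ext q B)" using models_ext_iff[OF B] by simp
qed

lemma ket_mem_ran_proj:
  assumes Q: "is_proj W (Q::'v::finite mat)" and one: "Q s s = 1"
  shows "ket s \<in> ran Q"
proof -
  let ?f = "\<lambda>u. (cmod (Q u s))^2"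
  have "(\<Sum>u\<in>UNIV. ?f u) = 1" using proj_diag(1)[OF Q, of s] one by (metis of_real_eq_1_iff)
  moreover have "(\<Sum>u\<in>UNIV. ?f u) = ?f s + (\<Sum>u\<in>UNIV - {s}. ?f u)"
    by (rule sum.remove) auto
  ultimately have "(\<Sum>u\<in>UNIV - {s}. ?f u) = 0" using one by simp
  then have "Q u s = 0" if "u \<noteq> s" for u using that by (subst (asm) sum_nonneg_eq_0_iff) auto
  then have "mv Q (ket s) = ket s" unfolding mv_ket using one by (auto simp: ket_def)
  then show ?thesis by (metis mv_mem_ran)
qed

lemma supp_in_empty_iff: "supp_in {} s \<longleftrightarrow> s = zero_st"
  unfolding supp_in_def zero_st_def by auto

lemma proj_onto_zero: "proj_onto W {\<lambda>s::'v::finite st. 0 :: complex} = mzero"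
proof -
  have "is_subspace W {\<lambda>s::'v st. 0 :: complex}" unfolding is_subspace_def vec_on_def by auto
  then show ?thesis using proj_onto_subspace(2) proj_eq_mzeroI ran_mzero by (metis order_refl)
qed

text \<open>Since \<open>q - q = {}\<close>, the weakest precondition of \<open>q := 0\<close> lives on a one-dimensional
  space: it is the identity if \<open>Q zero_st zero_st = 1\<close> and zero otherwise.\<close>

lemma wp_init_eq_mzero:
  assumes Q: "is_proj q (Q::'v::finite mat)" and n: "Q zero_st zero_st \<noteq> 1"
  shows "ext_within q (q - q) (eig1 (q - q) (bra0 q Q)) = mzero"
proof -
  have "x = (\<lambda>s. 0)" if x: "x \<in> ran (idW {})" "mv (bra0 q Q) x = x" for x
  proof -
    have xs: "x s = 0" if "s \<noteq> zero_st" for s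
      using vec_on_ran[OF on_reg_idW x(1)] that supp_in_empty_iff unfolding vec_on_def by blast
    have "mv (bra0 q Q) x zero_st
        = (\<Sum>t\<in>UNIV. if t = (zero_st::'v st) then bra0 q Q zero_st zero_st * x zero_st else 0)"
      unfolding mv_def by (rule sum.cong) (auto simp: xs)
    also have "\<dots> = Q zero_st zero_st * x zero_st" by (simp add: bra0_def zero_st_def)
    finally have "Q zero_st zero_st * x zero_st = x zero_st" using x(2) by simp
    then have "x zero_st = 0" using n by (metis mult_cancel_right2)
    then show ?thesis using xs by (intro ext) (case_tac "s = zero_st", auto)
  qed
  then have "{x. x \<in> ran (idW {}) \<and> mv (bra0 q Q) x = x} = {\<lambda>s. 0}"
    using zero_in_ran mv_zero by blast
  then show ?thesis
    unfolding eig1_def by (simp add: proj_onto_zero) (auto simp: ext_within_def mzero_def intro!: ext)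
qed

lemma ptr_apply:
  assumes P: "on_reg q (P::'v::finite mat)"
  shows "ptr q P s t = (if s = zero_st \<and> t = zero_st then mtrace P else 0)"
proof (cases "s = zero_st \<and> t = zero_st")
  case True
  have "merge q u zero_st = u" if "supp_in q u" for u
    using that unfolding merge_def supp_in_def zero_st_def by (auto intro!: ext)
  then have "(\<Sum>u\<in>{u. supp_in q u}. P (merge q u zero_st) (merge q u zero_st))
      = (\<Sum>u\<in>{u. supp_in q u}. P u u)"
    by (intro sum.cong) auto
  also have "\<dots> = (\<Sum>u\<in>UNIV. P u u)"
    by (rule sum_supp_in_eq_sum_UNIV) (use P in \<open>auto simp: on_reg_def\<close>)
  finally show ?thesis using True by (simp add: ptr_def mtrace_def zero_st_def)
next
  case False
  have "P (merge q u s) (merge q u t) = 0" if "\<forall>x\<in>q. \<not> s x \<and> \<not> t x" for u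
  proof -
    from False obtain x where "s x \<or> t x" unfolding zero_st_def by (auto simp: fun_eq_iff)
    then have "\<not> supp_in q (merge q u s) \<or> \<not> supp_in q (merge q u t)"
      using that unfolding supp_in_def merge_def by auto
    then show ?thesis using P unfolding on_reg_def by blast
  qed
  then show ?thesis using False unfolding ptr_def by auto
qed

lemma Re_mtrace_proj_pos:
  assumes P: "is_proj W (P::'v::finite mat)" and n: "P \<noteq> mzero"
  shows "0 < Re (mtrace P)"
proof -
  obtain s t where st: "P s t \<noteq> 0" using n unfolding mzero_def by (auto simp: fun_eq_iff)
  then have "0 < (cmod (P s t))^2" by simp
  also have "\<dots> \<le> (\<Sum>u\<in>UNIV. (cmod (P u t))^2)" by (rule member_le_sum) auto
  also have "\<dots> = Re (P t t)" using proj_diag(1)[OF P, of t] by simp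
  also have "\<dots> \<le> (\<Sum>u\<in>UNIV. Re (P u u))" by (rule member_le_sum) (use proj_diag(2)[OF P] in auto)
  finally show ?thesis by (simp add: mtrace_def Re_sum)
qed

text \<open>The partial trace of a nonzero \<open>P\<close> over \<open>q\<close> is a nonzero multiple of the projector onto
  \<open>ket zero_st\<close>, so the strongest postcondition of \<open>q := 0\<close> contains \<open>ket zero_st\<close>.\<close>

lemma ket_zero_mem_ran_sp_init:
  assumes P: "is_proj q (P::'v::finite mat)" and n: "P \<noteq> mzero"
  shows "ket zero_st \<in> ran (zt q (supp (q - q) (ptr q P)))"
proof -
  let ?T = "ptr q P"
  have T: "?T s t = (if s = zero_st \<and> t = zero_st then mtrace P else 0)" for s t
    by (rule ptr_apply[OF is_projD(1)[OF P]])
  have tr0: "mtrace P \<noteq> 0" using Re_mtrace_proj_pos[OF P n] by auto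
  have "mv ?T (\<lambda>u. (1 / mtrace P) * ket zero_st u) = ket zero_st"
    unfolding mv_scale mv_ket using tr0 by (auto simp: T ket_def)
  then have "ket zero_st \<in> ran ?T" by (metis mv_mem_ran)
  moreover have "on_reg {} ?T" unfolding on_reg_def T supp_in_empty_iff by auto
  note C = proj_onto_subspace[OF subspace_ran[OF this]]
  let ?C = "supp {} ?T"
  have "is_proj {} ?C" using C(1) by (simp add: supp_def)
  moreover have "ket zero_st \<in> ran ?C" using C(2) \<open>ket zero_st \<in> ran ?T\<close> by (simp add: supp_def)
  ultimately have "mv ?C (ket zero_st) = ket zero_st" using mem_ran_idem_iff is_projD(2) by blast
  then have Cc: "?C s zero_st = ket zero_st s" for s by (metis mv_ket)
  have r0: "restr (- q) zero_st = zero_st" unfolding restr_def zero_st_def by simp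
  have "mv (zt q ?C) (ket zero_st) = ket zero_st"
  proof
    fix s :: "'v st"
    have "(\<forall>x\<in>q. \<not> s x) \<and> restr (- q) s = zero_st \<longleftrightarrow> s = zero_st"
      unfolding restr_def zero_st_def by (auto simp: fun_eq_iff)
    then show "mv (zt q ?C) (ket zero_st) s = ket zero_st s"
      unfolding mv_ket zt_def r0 Cc by (auto simp: ket_def zero_st_def)
  qed
  then show ?thesis using mv_mem_ran[of "zt q ?C" "ket zero_st"] by simp
qed

section \<open>Certified triples\<close>

fun atomic :: "'v prog \<Rightarrow> bool" where
  "atomic Skip = True"
| "atomic Abort = True"
| "atomic (Init _) = True"
| "atomic (Apply _ _) = True"
| "atomic (Assert _ _) = True"
| "atomic _ = False"

text \<open>Atomic commands enter only through valid semantic triples, so that the certificates of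
  specifications and compound commands can be inverted.\<close>

inductive cert :: "'v::finite set \<Rightarrow> 'v mat \<Rightarrow> 'v prog \<Rightarrow> 'v mat \<Rightarrow> bool" for q where
  cert_top: "is_proj q A \<Longrightarrow> cert q A S (idW q)"
| cert_bot: "is_proj q B \<Longrightarrow> cert q mzero S B"
| cert_spec: "is_proj q A \<Longrightarrow> is_proj q B \<Longrightarrow> ran A \<subseteq> ran X \<Longrightarrow> ran Y \<subseteq> ran B \<Longrightarrow>
    cert q A (Spec X Y q) B"
| cert_atomic: "is_proj q A \<Longrightarrow> is_proj q B \<Longrightarrow> atomic S \<Longrightarrow> hoare (ext q A) S (ext q B) \<Longrightarrow>
    cert q A S B"
| cert_seq: "cert q A S0 R \<Longrightarrow> cert q R S1 B \<Longrightarrow> cert q A (Seq S0 S1) B"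
| cert_pchoice: "cert q A S0 B \<Longrightarrow> cert q A S1 B \<Longrightarrow> cert q A (PChoice S0 p S1) B"
| cert_if: "cert q A1 S1 B \<Longrightarrow> cert q A0 S0 B \<Longrightarrow> is_proj q A \<Longrightarrow> is_proj q G \<Longrightarrow>
    ran (G ** A) \<subseteq> ran A1 \<Longrightarrow> ran (pcomp q G ** A) \<subseteq> ran A0 \<Longrightarrow> cert q A (If G q S1 S0) B"
| cert_while: "cert q A1 S I \<Longrightarrow> is_proj q I \<Longrightarrow> is_proj q A \<Longrightarrow> is_proj q B \<Longrightarrow> is_proj q G \<Longrightarrow>
    ran (G ** I) \<subseteq> ran A1 \<Longrightarrow> ran (pcomp q G ** I) \<subseteq> ran B \<Longrightarrow> ran A \<subseteq> ran I \<Longrightarrow>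
    cert q A (While G q S) B"

lemma cert_proj: "cert q A S B \<Longrightarrow> is_proj q A \<and> is_proj q B"
  by (induction rule: cert.induct) (auto simp: is_proj_idW is_proj_mzero)

lemma cert_sound: "cert q A S B \<Longrightarrow> wf S \<Longrightarrow> hoare (ext q A) S (ext q B)"
proof (induction rule: cert.induct)
  case (cert_top A S) then show ?case by (simp add: ext_idW hoare_top)
next
  case (cert_bot B S) then show ?case by (simp add: hoare_bot)
next
  case (cert_spec A B X Y) then show ?case by (intro hoare_spec)
next
  case (cert_atomic A B S) then show ?case by simp
next
  case (cert_seq A S0 R S1 B) then show ?case by (simp add: hoare_seq)
next
  case (cert_pchoice A S0 B S1 p)
  have "is_proj q B" using cert_proj[OF cert_pchoice.hyps(1)] by simp
  then show ?case using cert_pchoice.IH cert_pchoice.prems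
    by (intro hoare_pchoice is_projD(2)[OF is_proj_ext]) auto
next
  case (cert_if A1 S1 B A0 S0 A G)
  then show ?case using cert_proj[OF cert_if.hyps(1)] cert_proj[OF cert_if.hyps(2)]
    by (intro hoare_if) auto
next
  case (cert_while A1 S I A B G)
  then show ?case using cert_proj[OF cert_while.hyps(1)] by (intro hoare_while) auto
qed

lemma cert_trivial: "cert q A S B \<Longrightarrow> B = idW q \<or> A = mzero \<Longrightarrow> cert q A T B"
  using cert_proj cert_top cert_bot by metis

lemma cert_SpecD: "cert q A (Spec X Y r) B \<Longrightarrow>
   B = idW q \<or> A = mzero \<or> (r = q \<and> ran A \<subseteq> ran X \<and> ran Y \<subseteq> ran B)"
  by (erule cert.cases) auto

lemma cert_SeqD: "cert q A (Seq S0 S1) B \<Longrightarrow>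
   B = idW q \<or> A = mzero \<or> (\<exists>R. cert q A S0 R \<and> cert q R S1 B)"
  by (erule cert.cases) auto

lemma cert_PChoiceD: "cert q A (PChoice S0 p S1) B \<Longrightarrow>
   B = idW q \<or> A = mzero \<or> (cert q A S0 B \<and> cert q A S1 B)"
  by (erule cert.cases) auto

lemma cert_IfD: "cert q A (If G r S1 S0) B \<Longrightarrow>
   B = idW q \<or> A = mzero \<or> (r = q \<and> (\<exists>A1 A0. cert q A1 S1 B \<and> cert q A0 S0 B \<and> is_proj q G \<and>
     ran (G ** A) \<subseteq> ran A1 \<and> ran (pcomp q G ** A) \<subseteq> ran A0))"
  by (erule cert.cases) auto

lemma cert_WhileD: "cert q A (While G r S) B \<Longrightarrow>
   B = idW q \<or> A = mzero \<or> (r = q \<and> (\<exists>A1 I. cert q A1 S I \<and> is_proj q I \<and> is_proj q G \<and>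
     ran (G ** I) \<subseteq> ran A1 \<and> ran (pcomp q G ** I) \<subseteq> ran B \<and> ran A \<subseteq> ran I))"
  by (erule cert.cases) auto

lemma cert_SpecE:
  assumes "cert q0 A (Spec X Y q) B"
    and "q = q0 \<Longrightarrow> is_proj q0 A \<Longrightarrow> is_proj q0 B \<Longrightarrow> ran A \<subseteq> ran X \<Longrightarrow> ran Y \<subseteq> ran B \<Longrightarrow>
      cert q0 A T B"
  shows "cert q0 A T B"
  using cert_SpecD[OF assms(1)] cert_trivial[OF assms(1)] cert_proj[OF assms(1)] assms(2) by blast

section \<open>Refinement rules preserve certified triples\<close>

lemma cert_refine_c_bot: "cert q0 A (Spec mzero Q q) B \<Longrightarrow> cert q0 A S B"
  by (erule cert_SpecE) (metis proj_eq_mzeroI cert_bot)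

lemma cert_refine_c_top: "cert q0 A (Spec P (idW q) q) B \<Longrightarrow> cert q0 A S B"
  by (erule cert_SpecE) (metis proj_eq_idWI cert_top)

lemma cert_refine_c_abort: "cert q0 A (Spec P Q q) B \<Longrightarrow> cert q0 A Abort B"
  by (erule cert_SpecE) (simp add: cert_atomic hoare_abort)

lemma cert_refine_c_skip: "cert q0 A (Spec P P q) B \<Longrightarrow> cert q0 A Skip B"
  by (erule cert_SpecE) (simp add: cert_atomic hoare_skip)

lemma cert_refine_c_cons:
  "ple P R \<Longrightarrow> ple T Q \<Longrightarrow> cert q0 A (Spec P Q q) B \<Longrightarrow> cert q0 A (Spec R T q) B"
  unfolding ple_def by (erule cert_SpecE) (simp add: cert_spec subset_trans)

lemma cert_refine_c_seq:
  "is_proj q R \<Longrightarrow> cert q0 A (Spec P Q q) B \<Longrightarrow> cert q0 A (Seq (Spec P R q) (Spec R Q q)) B"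
  by (erule cert_SpecE) (metis cert_seq cert_spec order_refl)

lemma cert_refine_w_init:
  assumes Q: "is_proj q Q"
  shows "cert q0 A (Spec (ext_within q (q - q) (eig1 (q - q) (bra0 q Q))) Q q) B \<Longrightarrow>
    cert q0 A (Init q) B"
proof (erule cert_SpecE)
  assume h: "q = q0" "is_proj q0 A" "is_proj q0 B"
    "ran A \<subseteq> ran (ext_within q (q - q) (eig1 (q - q) (bra0 q Q)))" "ran Q \<subseteq> ran B"
  show "cert q0 A (Init q) B"
  proof (cases "Q zero_st zero_st = 1")
    case True
    then have "ket zero_st \<in> ran B" using ket_mem_ran_proj[OF Q] h(5) by blast
    then show ?thesis using hoare_init[OF h(3)] h by (simp add: cert_atomic)
  next
    case False
    then have "A = mzero" using h(4) wp_init_eq_mzero[OF Q] proj_eq_mzeroI by simp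
    then show ?thesis using cert_bot[OF h(3)] by simp
  qed
qed

lemma cert_refine_s_init:
  assumes P: "is_proj q P"
  shows "cert q0 A (Spec P (zt q (supp (q - q) (ptr q P))) q) B \<Longrightarrow> cert q0 A (Init q) B"
proof (erule cert_SpecE)
  assume h: "q = q0" "is_proj q0 A" "is_proj q0 B"
    "ran A \<subseteq> ran P" "ran (zt q (supp (q - q) (ptr q P))) \<subseteq> ran B"
  show "cert q0 A (Init q) B"
  proof (cases "P = mzero")
    case False
    then have "ket zero_st \<in> ran B" using ket_zero_mem_ran_sp_init[OF P] h(5) by blast
    then show ?thesis using hoare_init[OF h(3)] h by (simp add: cert_atomic)
  next
    case True
    then have "A = mzero" using h(4) proj_eq_mzeroI by simp
    then show ?thesis using cert_bot[OF h(3)] by simp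
  qed
qed

lemma cert_refine_w_unit:
  assumes Q: "is_proj q Q" and U: "is_unitary q U"
  shows "cert q0 A (Spec (madj U ** Q ** U) Q q) B \<Longrightarrow> cert q0 A (Apply q U) B"
proof (erule cert_SpecE)
  assume h: "q = q0" "is_proj q0 A" "is_proj q0 B" "ran A \<subseteq> ran (madj U ** Q ** U)" "ran Q \<subseteq> ran B"
  have Uh: "on_reg q U" "U ** madj U = idW q" using U by (auto simp: is_unitary_def)
  note Qh = is_projD[OF Q]
  let ?X = "madj U ** Q ** U"
  have "?X ** ?X = madj U ** (Q ** (U ** madj U) ** Q) ** U" by (simp add: mmult_assoc)
  then have "?X ** ?X = ?X" unfolding Uh(2) mmult_idW[OF Qh(1)] Qh(2) by (simp add: mmult_assoc)
  then have "?X ** A = A" using ran_subset_idem_iff h(4) by blast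
  then have "U ** A = (U ** madj U) ** Q ** (U ** A)" by (metis mmult_assoc)
  then have "U ** A = Q ** (U ** A)" unfolding Uh(2) idW_mmult[OF Qh(1)] .
  then have "ran (U ** A) \<subseteq> ran B" using ran_mmult_subset h(5) by (metis subset_trans)
  then show "cert q0 A (Apply q U) B" using hoare_apply[OF h(2,3)] Uh(1) h(1-3)
    by (simp add: cert_atomic)
qed

lemma cert_refine_s_unit:
  assumes P: "is_proj q P" and U: "is_unitary q U"
  shows "cert q0 A (Spec P (U ** P ** madj U) q) B \<Longrightarrow> cert q0 A (Apply q U) B"
proof (erule cert_SpecE)
  assume h: "q = q0" "is_proj q0 A" "is_proj q0 B" "ran A \<subseteq> ran P" "ran (U ** P ** madj U) \<subseteq> ran B"
  have Uh: "on_reg q U" "madj U ** U = idW q" using U by (auto simp: is_unitary_def)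
  have "P ** A = A" using ran_subset_idem_iff is_projD(2)[OF P] h(4) by blast
  moreover have "madj U ** (U ** A) = A"
    using Uh(2) idW_mmult[of q A] h(1,2) by (simp add: mmult_assoc[symmetric] is_proj_def)
  ultimately have "U ** A = (U ** P ** madj U) ** (U ** A)" by (simp add: mmult_assoc)
  then have "ran (U ** A) \<subseteq> ran B" using ran_mmult_subset h(5) by (metis subset_trans)
  then show "cert q0 A (Apply q U) B" using hoare_apply[OF h(2,3)] Uh(1) h(1-3)
    by (simp add: cert_atomic)
qed

lemma cert_refine_w_assert:
  assumes P: "is_proj q P" and Q: "is_proj q Q"
  shows "cert q0 A (Spec (sasaki_imp q P Q) Q q) B \<Longrightarrow> cert q0 A (Assert P q) B"
proof (erule cert_SpecE)
  assume h: "q = q0" "is_proj q0 A" "is_proj q0 B" "ran A \<subseteq> ran (sasaki_imp q P Q)" "ran Q \<subseteq> ran B"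
  then have "ran (P ** A) \<subseteq> ran B" using ran_mmult_subset_if_sasaki_imp[OF P Q] by blast
  then show "cert q0 A (Assert P q) B" using hoare_assert[OF h(2,3)] P h(1-3)
    by (simp add: cert_atomic)
qed

lemma cert_refine_s_assert:
  assumes P: "is_proj q P" and Q: "is_proj q Q"
  shows "cert q0 A (Spec P (sasaki_conj q Q P) q) B \<Longrightarrow> cert q0 A (Assert Q q) B"
proof (erule cert_SpecE)
  assume h: "q = q0" "is_proj q0 A" "is_proj q0 B" "ran A \<subseteq> ran P" "ran (sasaki_conj q Q P) \<subseteq> ran B"
  then have "ran (Q ** A) \<subseteq> ran B" using ran_mmult_subset_sasaki_conj[OF Q P] by blast
  then show "cert q0 A (Assert Q q) B" using hoare_assert[OF h(2,3)] Q h(1-3)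
    by (simp add: cert_atomic)
qed

lemma cert_refine_w_pch1:
  assumes P1: "is_proj q P1" and P2: "is_proj q P2"
  shows "cert q0 A (Spec (pmeet q P1 P2) Q q) B \<Longrightarrow>
    cert q0 A (PChoice (Spec P1 Q q) p (Spec P2 Q q)) B"
proof (erule cert_SpecE)
  assume h: "q = q0" "is_proj q0 A" "is_proj q0 B" "ran A \<subseteq> ran (pmeet q P1 P2)" "ran Q \<subseteq> ran B"
  then have "ran A \<subseteq> ran P1" "ran A \<subseteq> ran P2" using ran_pmeet[OF P1 P2] by auto
  then show "cert q0 A (PChoice (Spec P1 Q q) p (Spec P2 Q q)) B"
    using h by (auto intro!: cert_pchoice cert_spec)
qed

lemma cert_refine_w_pch2:
  assumes P1: "is_proj q P1" and P2: "is_proj q P2"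
    and c: "cert q0 A (PChoice (Spec P1 Q q) p (Spec P2 Q q)) B"
  shows "cert q0 A (Spec (pmeet q P1 P2) Q q) B"
proof (cases "B = idW q0 \<or> A = mzero")
  case True then show ?thesis using cert_trivial[OF c] by blast
next
  case False
  then have "cert q0 A (Spec P1 Q q) B" "cert q0 A (Spec P2 Q q) B" using cert_PChoiceD[OF c] by auto
  then have "q = q0" "ran A \<subseteq> ran P1" "ran A \<subseteq> ran P2" "ran Q \<subseteq> ran B"
    using cert_SpecD False by blast+
  then show ?thesis using cert_proj[OF c] ran_pmeet[OF P1 P2] by (auto intro!: cert_spec)
qed

lemma ran_subset_pjoin:
  assumes "is_proj W P" "is_proj W Q"
  shows "ran P \<subseteq> ran (pjoin W P Q)" "ran Q \<subseteq> ran (pjoin W P Q)"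
  using vec_sum_memI[OF _ zero_in_ran[of Q]] vec_sum_memI[OF zero_in_ran[of P]]
  unfolding ran_pjoin[OF assms] by auto

lemma cert_refine_s_pch1:
  assumes Q1: "is_proj q Q1" and Q2: "is_proj q Q2"
  shows "cert q0 A (Spec P (pjoin q Q1 Q2) q) B \<Longrightarrow>
    cert q0 A (PChoice (Spec P Q1 q) p (Spec P Q2 q)) B"
proof (erule cert_SpecE)
  assume h: "q = q0" "is_proj q0 A" "is_proj q0 B" "ran A \<subseteq> ran P" "ran (pjoin q Q1 Q2) \<subseteq> ran B"
  then have "ran Q1 \<subseteq> ran B" "ran Q2 \<subseteq> ran B" using ran_subset_pjoin[OF Q1 Q2] by auto
  then show "cert q0 A (PChoice (Spec P Q1 q) p (Spec P Q2 q)) B"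
    using h by (auto intro!: cert_pchoice cert_spec)
qed

lemma cert_refine_s_pch2:
  assumes Q1: "is_proj q Q1" and Q2: "is_proj q Q2"
    and c: "cert q0 A (PChoice (Spec P Q1 q) p (Spec P Q2 q)) B"
  shows "cert q0 A (Spec P (pjoin q Q1 Q2) q) B"
proof (cases "B = idW q0 \<or> A = mzero")
  case True then show ?thesis using cert_trivial[OF c] by blast
next
  case False
  then have "cert q0 A (Spec P Q1 q) B" "cert q0 A (Spec P Q2 q) B" using cert_PChoiceD[OF c] by auto
  then have h: "q = q0" "ran A \<subseteq> ran P" "ran Q1 \<subseteq> ran B" "ran Q2 \<subseteq> ran B"
    using cert_SpecD False by blast+
  have B: "is_proj q0 B" using cert_proj[OF c] by simp
  have "ran (pjoin q Q1 Q2) \<subseteq> ran B"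
  proof
    fix u assume "u \<in> ran (pjoin q Q1 Q2)"
    then obtain x y where "u = (\<lambda>s. x s + y s)" "x \<in> ran B" "y \<in> ran B"
      using h(3,4) unfolding ran_pjoin[OF Q1 Q2] by blast
    then show "u \<in> ran B" using subspace_add[OF subspace_ran[OF is_projD(1)[OF B]]] by simp
  qed
  then show ?thesis using h(1,2) cert_proj[OF c] by (auto intro!: cert_spec)
qed

lemma cert_refine_w_if1:
  assumes P: "is_proj q P" and P1: "is_proj q P1" and P0: "is_proj q P0"
  shows "cert q0 A (Spec (pmeet q (sasaki_imp q P P1) (sasaki_imp q (pcomp q P) P0)) Q q) B \<Longrightarrow>
    cert q0 A (If P q (Spec P1 Q q) (Spec P0 Q q)) B"
proof (erule cert_SpecE)
  let ?X = "pmeet q (sasaki_imp q P P1) (sasaki_imp q (pcomp q P) P0)"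
  assume h: "q = q0" "is_proj q0 A" "is_proj q0 B" "ran A \<subseteq> ran ?X" "ran Q \<subseteq> ran B"
  have "ran A \<subseteq> ran (sasaki_imp q P P1)" "ran A \<subseteq> ran (sasaki_imp q (pcomp q P) P0)"
    using h(4) ran_pmeet[OF is_proj_sasaki_imp[OF P P1] is_proj_sasaki_imp[OF is_proj_pcomp[OF P] P0]]
    by auto
  then have "ran (P ** A) \<subseteq> ran P1" "ran (pcomp q P ** A) \<subseteq> ran P0"
    using ran_mmult_subset_if_sasaki_imp P P1 P0 is_proj_pcomp by blast+
  moreover have "cert q P1 (Spec P1 Q q) B" "cert q P0 (Spec P0 Q q) B"
    using P1 P0 h by (auto intro!: cert_spec)
  ultimately show "cert q0 A (If P q (Spec P1 Q q) (Spec P0 Q q)) B"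
    using h(1,2) P by (auto intro: cert_if)
qed

text \<open>If neither branch certificate yields \<open>Q \<subseteq> B\<close>, both branches must start from the zero
  projector, which forces \<open>A = 0\<close>.\<close>

lemma cert_refine_w_if2:
  assumes P: "is_proj q P" and P1: "is_proj q P1" and P0: "is_proj q P0"
    and c: "cert q0 A (If P q (Spec P1 Q q) (Spec P0 Q q)) B"
  shows "cert q0 A (Spec (pmeet q (sasaki_imp q P P1) (sasaki_imp q (pcomp q P) P0)) Q q) B"
proof (cases "B = idW q0 \<or> A = mzero")
  case True then show ?thesis using cert_trivial[OF c] by blast
next
  case False
  let ?X = "pmeet q (sasaki_imp q P P1) (sasaki_imp q (pcomp q P) P0)"
  have A: "is_proj q0 A" and B: "is_proj q0 B" using cert_proj[OF c] by auto
  obtain A1 A0 where q: "q = q0"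
    and c1: "cert q0 A1 (Spec P1 Q q) B" and c0: "cert q0 A0 (Spec P0 Q q) B"
    and r1: "ran (P ** A) \<subseteq> ran A1" and r0: "ran (pcomp q P ** A) \<subseteq> ran A0"
    using cert_IfD[OF c] False by blast
  have b1: "A1 = mzero \<or> (ran A1 \<subseteq> ran P1 \<and> ran Q \<subseteq> ran B)" using cert_SpecD[OF c1] False by blast
  have b0: "A0 = mzero \<or> (ran A0 \<subseteq> ran P0 \<and> ran Q \<subseteq> ran B)" using cert_SpecD[OF c0] False by blast
  have "ran (P ** A) \<subseteq> ran P1" using b1 r1 zero_in_ran[of P1] by (auto simp: ran_mzero)
  moreover have "ran (pcomp q P ** A) \<subseteq> ran P0" using b0 r0 zero_in_ran[of P0] by (auto simp: ran_mzero)
  ultimately have "ran A \<subseteq> ran ?X"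
    using ran_subset_sasaki_imp[OF P P1] ran_subset_sasaki_imp[OF is_proj_pcomp[OF P] P0]
      is_projD(1)[OF A] q
    unfolding ran_pmeet[OF is_proj_sasaki_imp[OF P P1] is_proj_sasaki_imp[OF is_proj_pcomp[OF P] P0]]
    by blast
  moreover have "ran Q \<subseteq> ran B"
  proof (rule ccontr)
    assume "\<not> ran Q \<subseteq> ran B"
    then have "A1 = mzero" "A0 = mzero" using b1 b0 by auto
    then have "P ** A = mzero" "pcomp q P ** A = mzero"
      using r1 r0 proj_eq_mzeroI by simp_all
    then have "A = mzero"
      using idW_mmult[OF is_projD(1)[OF A]] q unfolding pcomp_def mmult_msub_left
      by (simp add: msub_def mzero_def fun_eq_iff)
    then show False using False by simp
  qed
  ultimately show ?thesis using A B q by (auto intro: cert_spec)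
qed

lemma cert_refine_w_while:
  assumes P: "is_proj q P" and Q: "is_proj q Q" and R: "is_proj q R"
  shows "cert q0 A (Spec (pmeet q (sasaki_imp q P Q) (sasaki_imp q (pcomp q P) R)) R q) B \<Longrightarrow>
    cert q0 A (While P q (Spec Q (pmeet q (sasaki_imp q P Q) (sasaki_imp q (pcomp q P) R)) q)) B"
proof (erule cert_SpecE)
  let ?X = "pmeet q (sasaki_imp q P Q) (sasaki_imp q (pcomp q P) R)"
  assume h: "q = q0" "is_proj q0 A" "is_proj q0 B" "ran A \<subseteq> ran ?X" "ran R \<subseteq> ran B"
  have X: "is_proj q ?X"
    by (intro is_proj_pmeet is_proj_sasaki_imp is_proj_pcomp P Q R)
  have "ran ?X \<subseteq> ran (sasaki_imp q P Q)" "ran ?X \<subseteq> ran (sasaki_imp q (pcomp q P) R)"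
    using ran_pmeet[OF is_proj_sasaki_imp[OF P Q] is_proj_sasaki_imp[OF is_proj_pcomp[OF P] R]] by auto
  then have "ran (P ** ?X) \<subseteq> ran Q" "ran (pcomp q P ** ?X) \<subseteq> ran B"
    using ran_mmult_subset_if_sasaki_imp[OF P Q]
      ran_mmult_subset_if_sasaki_imp[OF is_proj_pcomp[OF P] R] h(5)
    by blast+
  moreover have "cert q Q (Spec Q ?X q) ?X" using Q X by (auto intro!: cert_spec)
  ultimately show "cert q0 A (While P q (Spec Q ?X q)) B"
    using X h P by (auto intro: cert_while)
qed

lemma cert_refine_s_if:
  assumes P: "is_proj q P" and R: "is_proj q R"
  shows "cert q0 A (Spec P Q q) B \<Longrightarrow>
    cert q0 A (If R q (Spec (sasaki_conj q R P) Q q) (Spec (sasaki_conj q (pcomp q R) P) Q q)) B"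
proof (erule cert_SpecE)
  assume h: "q = q0" "is_proj q0 A" "is_proj q0 B" "ran A \<subseteq> ran P" "ran Q \<subseteq> ran B"
  have "ran (R ** A) \<subseteq> ran (sasaki_conj q R P)"
    "ran (pcomp q R ** A) \<subseteq> ran (sasaki_conj q (pcomp q R) P)"
    using ran_mmult_subset_sasaki_conj[OF R P h(4)]
      ran_mmult_subset_sasaki_conj[OF is_proj_pcomp[OF R] P h(4)] by blast+
  moreover have "cert q (sasaki_conj q R P) (Spec (sasaki_conj q R P) Q q) B"
    "cert q (sasaki_conj q (pcomp q R) P) (Spec (sasaki_conj q (pcomp q R) P) Q q) B"
    using is_proj_sasaki_conj[OF R P] is_proj_sasaki_conj[OF is_proj_pcomp[OF R] P] h
    by (auto intro!: cert_spec)
  ultimately show "cert q0 A (If R q (Spec (sasaki_conj q R P) Q q)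
      (Spec (sasaki_conj q (pcomp q R) P) Q q)) B"
    using h(1,2) R by (auto intro: cert_if)
qed

lemma cert_refine_s_while:
  assumes P: "is_proj q P" and I: "is_proj q Inv"
  shows "cert q0 A (Spec Inv (sasaki_conj q (pcomp q P) Inv) q) B \<Longrightarrow>
    cert q0 A (While P q (Spec (sasaki_conj q P Inv) Inv q)) B"
proof (erule cert_SpecE)
  assume h: "q = q0" "is_proj q0 A" "is_proj q0 B" "ran A \<subseteq> ran Inv"
    "ran (sasaki_conj q (pcomp q P) Inv) \<subseteq> ran B"
  have "ran (P ** Inv) \<subseteq> ran (sasaki_conj q P Inv)" "ran (pcomp q P ** Inv) \<subseteq> ran B"
    using ran_mmult_subset_sasaki_conj[OF P I] ran_mmult_subset_sasaki_conj[OF is_proj_pcomp[OF P] I]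
      h(5) by blast+
  moreover have "cert q (sasaki_conj q P Inv) (Spec (sasaki_conj q P Inv) Inv q) Inv"
    using is_proj_sasaki_conj[OF P I] I by (auto intro!: cert_spec)
  ultimately show "cert q0 A (While P q (Spec (sasaki_conj q P Inv) Inv q)) B"
    using h I P by (auto intro: cert_while)
qed

lemma deriv_cert: "deriv m S T \<Longrightarrow> cert q A S B \<Longrightarrow> cert q A T B"
proof (induction arbitrary: A B rule: deriv.induct)
  case (seq_mono S0 T0 S1 T1)
  from cert_SeqD[OF seq_mono.prems] show ?case
    using cert_trivial[OF seq_mono.prems] seq_mono.IH cert_seq by blast
next
  case (pch_mono S0 T0 S1 T1 p)
  from cert_PChoiceD[OF pch_mono.prems] show ?case
    using cert_trivial[OF pch_mono.prems] pch_mono.IH cert_pchoice by blast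
next
  case (if_mono S0 T0 S1 T1 P r)
  have "is_proj q A" using cert_proj[OF if_mono.prems] by simp
  with cert_IfD[OF if_mono.prems] show ?case
    using cert_trivial[OF if_mono.prems] if_mono.IH cert_if by metis
next
  case (while_mono S T P r)
  have "is_proj q A" "is_proj q B" using cert_proj[OF while_mono.prems] by auto
  with cert_WhileD[OF while_mono.prems] show ?case
    using cert_trivial[OF while_mono.prems] while_mono.IH cert_while by metis
qed (blast intro: cert_refine_c_bot cert_refine_c_top cert_refine_c_abort cert_refine_c_skip
    cert_refine_c_cons cert_refine_c_seq cert_refine_w_init cert_refine_w_unit cert_refine_w_assert
    cert_refine_w_pch1 cert_refine_w_pch2 cert_refine_w_if1 cert_refine_w_if2 cert_refine_w_while
    cert_refine_s_init cert_refine_s_unit cert_refine_s_assert cert_refine_s_pch1 cert_refine_s_pch2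
    cert_refine_s_if cert_refine_s_while)+

theorem theorem4p4:
  fixes q :: "'v::finite set" and P Q :: "'v mat" and S :: "'v prog"
  assumes "is_proj q P" and "is_proj q Q" and "wf S"
    and "deriv Wpc (Spec P Q q) S \<or> deriv Spc (Spec P Q q) S"
  shows "hoare (ext q P) S (ext q Q)"
proof -
  have "cert q P (Spec P Q q) Q" by (rule cert_spec[OF assms(1,2)]) auto
  then have "cert q P S Q" using assms(4) deriv_cert by blast
  then show ?thesis using cert_sound assms(3) by blast
qed
end
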